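(* Let $n\ge 1$ and consider the perturbed chain of integrators $$\dot x_1=x_2,\ \dot x_2=x_3,\ \dots,\ \dot x_{n-1}=x_n,\qquad \dot x_n=f(\mathbf{x},t)+b(\mathbf{x},t)u(t)+d_0(\mathbf{x},t),$$ with state $\mathbf{x}=[x_1,\dots,x_n]^T\in\mathbb{R}^n$, scalar control $u$, locally Lipschitz drift $f:\mathbb{R}^n\times\mathbb{R}^{\ge0}\to\mathbb{R}$ decomposed as $f=f_n+f_\Delta$ with $f_n$ a known nominal part and $f_\Delta$ an unknown perturbation, input gain $b:\mathbb{R}^n\times\mathbb{R}^{\ge0}\to\mathbb{R}$ (with $b(\mathbf{x},t)\neq 0$ so that $b^{-1}$ exists), and unknown perturbation $d_0:\mathbb{R}^n\times\mathbb{R}^{\ge 0}\to\mathbb{R}$. Assume that $|f_\Delta(\mathbf{x},t)|\le f_{\max}$ and $|d_0(\mathbf{x},t)|\le d_{\max}$ for all $(\mathbf{x},t)$, where $f_{\max},d_{\max}\ge 0$ are known constants. Define the full-order integral-terminal sliding manifold $$s=x_n-z,\qquad \dot z=-\sum_{i=1}^n C_i|x_i|^{\alpha_i}\operatorname{sgn}(x_i),\qquad z(0)=x_n(0),$$ where the constants $C_1,\dots,C_n$ are such that the polynomial $p^n+C_np^{n-1}+C_{n-1}p^{n-2}+\cdots+C_2p+C_1$ is Hurwitz, and the exponents are given by $\alpha_1=\alpha$ if $n=1$, and for $n\ge 2$ by $\alpha_{n+1}=1$, $\alpha_n=\alpha$, $\alpha_{i-1}=\dfrac{\alpha_i\alpha_{i+1}}{2\alpha_{i+1}-\alpha_i}$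 for $i=2,\dots,n$, with $\alpha\in(1-\varepsilon,1)$ for some $\varepsilon\in(0,1)$. Apply the control $$u=b^{-1}(\mathbf{x},t)\big(u_{\mathrm{eqv}}+u_{\mathrm{dis}}\big),\quad u_{\mathrm{eqv}}=-f_n(\mathbf{x},t)-\sum_{i=1}^n C_i|x_i|^{\alpha_i}\operatorname{sgn}(x_i),\quad u_{\mathrm{dis}}=-(\eta+d_{\max}+f_{\max})\operatorname{sgn}(s),$$ with $\eta>0$. Then the state trajectories of the closed-loop system converge to the origin in finite time.
   Context: $\operatorname{sgn}$ denotes the standard signum function. The total matched disturbance is $d=d_0+f_\Delta$. The initialization $z(0)=x_n(0)$ means $s(0)=0$. *)

theory Defs
  imports "HOL-Analysis.Analysis" "HOL-Computational_Algebra.Polynomial"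
begin

text \<open>State vectors of R^n are represented as functions nat => real supported on {1..n}.\<close>
definition vecs :: "nat \<Rightarrow> (nat \<Rightarrow> real) set" where
  "vecs n = {v. \<forall>i. i \<notin> {1..n} \<longrightarrow> v i = 0}"

text \<open>Locally Lipschitz on R^n x [0,oo) (equivalently: Lipschitz on bounded sets).\<close>
definition loc_lipschitz_state :: "nat \<Rightarrow> ((nat \<Rightarrow> real) \<Rightarrow> real \<Rightarrow> real) \<Rightarrow> bool" where
  "loc_lipschitz_state n f \<longleftrightarrow>
     (\<forall>R>0. \<exists>L. \<forall>x\<in>vecs n. \<forall>y\<in>vecs n. \<forall>t\<in>{0..R}. \<forall>t'\<in>{0..R}.
        (\<forall>i. \<bar>x i\<bar> \<le> R \<and> \<bar>y i\<bar> \<le> R) \<longrightarrow>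
        \<bar>f x t - f y t'\<bar> \<le> L * ((\<Sum>i=1..n. \<bar>x i - y i\<bar>) + \<bar>t - t'\<bar>))"

definition char_poly :: "nat \<Rightarrow> (nat \<Rightarrow> real) \<Rightarrow> complex poly" where
  "char_poly n C = monom 1 n + (\<Sum>i=1..n. monom (complex_of_real (C i)) (i - 1))"

definition hurwitz :: "complex poly \<Rightarrow> bool" where
  "hurwitz p \<longleftrightarrow> (\<forall>z. poly p z = 0 \<longrightarrow> Re z < 0)"

text \<open>Backward recursion: alpha_aux a m = (alpha_(n-m), alpha_(n+1-m)),
  starting from (alpha_n, alpha_(n+1)) = (a, 1).\<close>
fun alpha_aux :: "real \<Rightarrow> nat \<Rightarrow> real \<times> real" where
  "alpha_aux a 0 = (a, 1)"
| "alpha_aux a (Suc m) = (let (p, q) = alpha_aux a m in (p * q / (2 * q - p), p))"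

definition alphas :: "nat \<Rightarrow> real \<Rightarrow> nat \<Rightarrow> real" where
  "alphas n a i = fst (alpha_aux a (n - i))"

text \<open>Set-valued signum (Filippov regularisation of sgn).\<close>
definition Sgn :: "real \<Rightarrow> real set" where
  "Sgn s = (if s = 0 then {-1..1} else {sgn s})"

end

theory Submission
  imports Defs "HOL-Computational_Algebra.Fundamental_Theorem_Algebra"
begin

text \<open>On the sliding surface the closed loop is the chain x_i' = x_(i+1),
  x_n' = - \<Sum>i. C_i |x_i|^\<alpha>_i sgn x_i, and the surface is never left because s starts at 0
  and the switching term dominates the bounded disturbance. With \<delta> = 1/\<alpha> - 1 this field is
  homogeneous of degree -\<delta> for the weights r_i = 1 + (n + 1 - i) \<delta>, and it tends to the
  Hurwitz linear chain as \<alpha> \<rightarrow> 1. A quadratic Lyapunov function V of the linear chain, built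
  from the factorisation of its characteristic polynomial, therefore still decreases at a uniform
  rate on the shell {v0 \<le> V \<le> 2} once \<alpha> is close to 1. By homogeneity the same holds on every
  dilated shell, the time needed to pass from scale \<mu> to scale \<mu>/2 is at most a constant times
  \<mu>^\<delta>, and these times form a convergent geometric series.\<close>

section \<open>Signed powers near the identity\<close>

definition signed_powr :: "real \<Rightarrow> real \<Rightarrow> real" where
  "signed_powr \<beta> u = \<bar>u\<bar> powr \<beta> * sgn u"

lemma powr_sub_self_le_small:
  fixes u \<beta> :: real
  assumes \<beta>: "1/2 \<le> \<beta>" "\<beta> \<le> 1" and u: "0 < u" "u \<le> 1"
  shows "u powr \<beta> - u \<le> 2 * (1 - \<beta>)"
proof -
  define t where "t = u powr \<beta>"
  have t0: "t > 0" using u by (simp add: t_def)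
  have "u powr (1 - \<beta>) = exp ((1 - \<beta>) * ln u)" using u by (simp add: powr_def)
  then have exp_bound: "1 - u powr (1 - \<beta>) \<le> (1 - \<beta>) * (- ln u)"
    using exp_ge_add_one_self[of "(1 - \<beta>) * ln u"] by linarith
  have "- ln t \<le> 1 / t"
    using ln_le_minus_one[of "1/t"] t0 by (simp add: ln_div)
  then have ln_bound: "t * (- ln t) \<le> 1" using t0 by (simp add: field_simps)
  have "u powr \<beta> - u = t * (1 - u powr (1 - \<beta>))"
    using u by (simp add: t_def algebra_simps powr_add[symmetric])
  also have "\<dots> \<le> t * ((1 - \<beta>) * (- ln u))" using exp_bound t0 by (intro mult_left_mono) auto
  also have "\<dots> = (1 - \<beta>) * (t * (- ln t)) / \<beta>"
    using \<beta> u by (simp add: t_def field_simps)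
  also have "\<dots> \<le> (1 - \<beta>) / \<beta>"
    using ln_bound \<beta> by (intro divide_right_mono mult_left_le) auto
  also have "\<dots> \<le> 2 * (1 - \<beta>)"
  proof -
    have "(1 - \<beta>) * 1 \<le> (1 - \<beta>) * (2 * \<beta>)" using \<beta> by (intro mult_left_mono) auto
    moreover have "\<beta> > 0" using \<beta> by simp
    ultimately show ?thesis by (simp add: field_simps)
  qed
  finally show ?thesis .
qed

lemma self_sub_powr_le_large:
  fixes u \<beta> :: real
  assumes \<beta>: "\<beta> \<le> 1" and u: "1 < u"
  shows "u - u powr \<beta> \<le> (1 - \<beta>) * u\<^sup>2"
proof -
  have "u powr (\<beta> - 1) = exp ((\<beta> - 1) * ln u)" using u by (simp add: powr_def)
  then have exp_bound: "1 - u powr (\<beta> - 1) \<le> (1 - \<beta>) * ln u"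
    using exp_ge_add_one_self[of "(\<beta> - 1) * ln u"] by (simp add: algebra_simps)
  have "u powr \<beta> = u powr (1 + (\<beta> - 1))" by simp
  also have "\<dots> = u * u powr (\<beta> - 1)" using u by (simp only: powr_add powr_one)
  finally have "u - u powr \<beta> = u * (1 - u powr (\<beta> - 1))" by (simp add: algebra_simps)
  also have "\<dots> \<le> u * ((1 - \<beta>) * ln u)" using exp_bound u by (intro mult_left_mono) auto
  also have "\<dots> \<le> u * ((1 - \<beta>) * u)"
    using ln_le_minus_one[of u] u \<beta> by (intro mult_left_mono) auto
  finally show ?thesis by (simp add: power2_eq_square algebra_simps)
qed

lemma signed_powr_close_to_id:
  fixes u \<beta> :: real
  assumes \<beta>: "1/2 \<le> \<beta>" "\<beta> \<le> 1"
  shows "\<bar>signed_powr \<beta> u - u\<bar> \<le> 2 * (1 - \<beta>) * (1 + u\<^sup>2)"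
proof -
  have main: "\<bar>v powr \<beta> - v\<bar> \<le> 2 * (1 - \<beta>) * (1 + v\<^sup>2)" if "0 < v" for v
  proof (cases "v \<le> 1")
    case True
    have "v \<le> v powr \<beta>" using powr_mono'[of \<beta> 1 v] True that \<beta> by simp
    moreover have "2 * (1 - \<beta>) \<le> 2 * (1 - \<beta>) * (1 + v\<^sup>2)" using \<beta> by (simp add: mult_le_cancel_left1)
    ultimately show ?thesis using powr_sub_self_le_small[OF \<beta> that True] by linarith
  next
    case False
    have "v powr \<beta> \<le> v" using powr_mono[of \<beta> 1 v] False \<beta> by simp
    moreover have "(1 - \<beta>) * v\<^sup>2 \<le> 2 * (1 - \<beta>) * (1 + v\<^sup>2)"
      using mult_nonneg_nonneg[of "1 - \<beta>" "2 + v\<^sup>2"] \<beta> by (simp add: algebra_simps)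
    moreover have "v - v powr \<beta> \<le> (1 - \<beta>) * v\<^sup>2" using self_sub_powr_le_large[OF \<beta>(2)] False by simp
    ultimately show ?thesis by simp
  qed
  have "signed_powr \<beta> u - u = sgn u * (\<bar>u\<bar> powr \<beta> - \<bar>u\<bar>)"
    by (simp add: signed_powr_def right_diff_distrib mult.commute abs_mult_sgn)
  then show ?thesis
    using main[of "\<bar>u\<bar>"] \<beta> by (cases "u = 0") (simp_all add: abs_mult)
qed

lemma signed_powr_homogeneous:
  assumes "\<mu> > 0" "r > 0"
  shows "signed_powr (1/r) (\<mu> powr r * u) = \<mu> * signed_powr (1/r) u"
  using assms by (simp add: signed_powr_def abs_mult powr_mult powr_powr sgn_mult)

section \<open>A Lyapunov function for a Hurwitz chain of integrators\<close>

text \<open>Along the chain y_k' = y_(k+1) the form of q moves to the form of p q, up to a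
  contribution of the last component (lemma poly_pairing_pCons).\<close>
definition poly_pairing :: "nat \<Rightarrow> complex poly \<Rightarrow> (nat \<Rightarrow> real) \<Rightarrow> complex" where
  "poly_pairing n q y = (\<Sum>k<n. coeff q k * complex_of_real (y (Suc k)))"

definition root_poly :: "(nat \<Rightarrow> complex) \<Rightarrow> nat \<Rightarrow> complex poly" where
  "root_poly rt j = (\<Prod>i<j. [:-rt i, 1:])"

lemma root_poly_Suc: "root_poly rt (Suc j) = root_poly rt j * [:-rt j, 1:]"
  by (simp add: root_poly_def)

lemma degree_root_poly: "degree (root_poly rt j) = j"
  by (simp add: root_poly_def degree_prod_sum_eq)

lemma lead_coeff_root_poly: "lead_coeff (root_poly rt j) = 1"
  by (simp add: root_poly_def lead_coeff_prod)

lemma coeff_root_poly_above: "j < k \<Longrightarrow> coeff (root_poly rt j) k = 0"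
  by (simp add: coeff_eq_0 degree_root_poly)

lemma pCons_0_root_poly: "pCons 0 (root_poly rt j) = root_poly rt (Suc j) + smult (rt j) (root_poly rt j)"
  by (simp add: root_poly_Suc mult_pCons_right algebra_simps)

lemma poly_pairing_add: "poly_pairing n (p + q) y = poly_pairing n p y + poly_pairing n q y"
  by (simp add: poly_pairing_def algebra_simps sum.distrib)

lemma poly_pairing_smult: "poly_pairing n (smult c q) y = c * poly_pairing n q y"
  by (simp add: poly_pairing_def sum_distrib_left algebra_simps)

lemma poly_pairing_scale: "poly_pairing n q (\<lambda>i. c * y i) = complex_of_real c * poly_pairing n q y"
  by (simp add: poly_pairing_def sum_distrib_left algebra_simps)

lemma poly_pairing_cong: "(\<And>i. 1 \<le> i \<Longrightarrow> i \<le> n \<Longrightarrow> y i = y' i) \<Longrightarrow> poly_pairing n q y = poly_pairing n q y'"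
  unfolding poly_pairing_def by (intro sum.cong) auto

lemma poly_pairing_pCons:
  assumes "n \<ge> 1" "\<And>k. Suc k < n \<Longrightarrow> g (Suc k) = y (Suc (Suc k))"
  shows "poly_pairing n q g = poly_pairing n (pCons 0 q) y + coeff q (n-1) * complex_of_real (g n)"
proof -
  obtain m where m: "n = Suc m" using assms(1) by (cases n) auto
  have "poly_pairing n q g = (\<Sum>k<m. coeff q k * complex_of_real (g (Suc k))) + coeff q m * complex_of_real (g n)"
    by (simp add: poly_pairing_def m)
  also have "(\<Sum>k<m. coeff q k * complex_of_real (g (Suc k))) = (\<Sum>k<m. coeff q k * complex_of_real (y (Suc (Suc k))))"
    using assms(2) m by (intro sum.cong) auto
  also have "\<dots> = poly_pairing n (pCons 0 q) y"
    unfolding poly_pairing_def m by (subst sum.lessThan_Suc_shift) simp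
  finally show ?thesis by (simp add: m)
qed

lemma coeff_char_poly:
  "coeff (char_poly n C) k = (if k = n then 1 else if k < n then complex_of_real (C (Suc k)) else 0)"
proof -
  have "(\<Sum>i=1..n. coeff (monom (complex_of_real (C i)) (i - 1)) k)
      = (\<Sum>i\<in>{1..n}. if i = Suc k then complex_of_real (C i) else 0)"
    by (intro sum.cong) (auto simp: coeff_monom)
  also have "\<dots> = (if k < n then complex_of_real (C (Suc k)) else 0)"
    by (subst sum.delta) auto
  finally show ?thesis by (auto simp: char_poly_def coeff_sum coeff_monom)
qed

lemma degree_char_poly: "degree (char_poly n C) = n"
proof (rule antisym)
  show "degree (char_poly n C) \<le> n" by (rule degree_le) (simp add: coeff_char_poly)
  show "n \<le> degree (char_poly n C)" by (rule le_degree) (simp add: coeff_char_poly)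
qed

lemma poly_pairing_char_poly: "poly_pairing n (char_poly n C) y = complex_of_real (\<Sum>i=1..n. C i * y i)"
proof -
  have "poly_pairing n (char_poly n C) y = (\<Sum>k<n. complex_of_real (C (Suc k) * y (Suc k)))"
    unfolding poly_pairing_def by (intro sum.cong) (auto simp: coeff_char_poly)
  also have "\<dots> = (\<Sum>i=1..n. complex_of_real (C i * y i))"
    using sum.atLeast1_atMost_eq[of "\<lambda>i. complex_of_real (C i * y i)" n] by simp
  finally show ?thesis by simp
qed

lemma char_poly_eq_root_poly:
  assumes "hurwitz (char_poly n C)"
  obtains rt where "root_poly rt n = char_poly n C" "\<And>i. i < n \<Longrightarrow> Re (rt i) < 0"
proof -
  obtain rt where rt: "smult (lead_coeff (char_poly n C)) (\<Prod>i<degree (char_poly n C). [:-rt i, 1:]) = char_poly n C"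
    by (rule complex_poly_decompose')
  have lc: "lead_coeff (char_poly n C) = 1" by (simp add: degree_char_poly coeff_char_poly)
  have eq: "root_poly rt n = char_poly n C" using rt lc by (simp add: root_poly_def degree_char_poly)
  have "Re (rt i) < 0" if "i < n" for i
  proof -
    have "poly (root_poly rt n) (rt i) = (\<Prod>j<n. poly [:-rt j, 1:] (rt i))"
      by (simp add: root_poly_def poly_prod)
    also have "\<dots> = 0" using that by (intro prod_zero) auto
    finally show ?thesis using assms eq unfolding hurwitz_def by auto
  qed
  then show ?thesis using eq that by blast
qed

text \<open>In the coordinates given by the forms of the partial products of the characteristic polynomial
  the linear chain is bidiagonal with the roots on the diagonal; \<theta> is the deviation of the
  last component from the linear feedback.\<close>
lemma poly_pairing_root_poly_step:
  assumes n1: "n \<ge> 1" and cp: "root_poly rt n = char_poly n C" and j: "j < n"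
    and g1: "\<And>k. Suc k < n \<Longrightarrow> g (Suc k) = y (Suc (Suc k))"
    and gn: "g n = - (\<Sum>i=1..n. C i * y i) + \<theta>"
  shows "poly_pairing n (root_poly rt j) g = rt j * poly_pairing n (root_poly rt j) y
           + (if Suc j < n then poly_pairing n (root_poly rt (Suc j)) y else complex_of_real \<theta>)"
proof -
  have "poly_pairing n (root_poly rt j) g = poly_pairing n (root_poly rt (Suc j)) y + rt j * poly_pairing n (root_poly rt j) y
        + coeff (root_poly rt j) (n-1) * complex_of_real (g n)"
    by (simp add: poly_pairing_pCons[OF n1, of g y, OF g1] pCons_0_root_poly poly_pairing_add poly_pairing_smult)
  also have "\<dots> = rt j * poly_pairing n (root_poly rt j) y
           + (if Suc j < n then poly_pairing n (root_poly rt (Suc j)) y else complex_of_real \<theta>)"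
  proof (cases "Suc j < n")
    case True
    then show ?thesis by (simp add: coeff_root_poly_above)
  next
    case False
    then have jn: "Suc j = n" using j by simp
    have c1: "coeff (root_poly rt j) (n-1) = 1" using lead_coeff_root_poly[of rt j] degree_root_poly[of rt j] jn by auto
    show ?thesis using False c1 jn cp by (simp add: poly_pairing_char_poly gn)
  qed
  finally show ?thesis .
qed

text \<open>The weights \<rho>^j make each coupling term of the bidiagonal form dominated by the decay
  of the next coordinate.\<close>
definition chain_lyap :: "nat \<Rightarrow> (nat \<Rightarrow> complex) \<Rightarrow> real \<Rightarrow> (nat \<Rightarrow> real) \<Rightarrow> real" where
  "chain_lyap n rt \<rho> y = (\<Sum>j<n. \<rho>^j * (cmod (poly_pairing n (root_poly rt j) y))^2)"

definition chain_lyap_deriv :: "nat \<Rightarrow> (nat \<Rightarrow> complex) \<Rightarrow> real \<Rightarrow> (nat \<Rightarrow> real) \<Rightarrow> (nat \<Rightarrow> real) \<Rightarrow> real" where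
  "chain_lyap_deriv n rt \<rho> y g = (\<Sum>j<n. \<rho>^j * (2 * Re (cnj (poly_pairing n (root_poly rt j) y) * poly_pairing n (root_poly rt j) g)))"

definition norm1 :: "nat \<Rightarrow> (nat \<Rightarrow> real) \<Rightarrow> real" where
  "norm1 n y = (\<Sum>i=1..n. \<bar>y i\<bar>)"

lemma chain_lyap_nonneg: "\<rho> \<ge> 0 \<Longrightarrow> chain_lyap n rt \<rho> y \<ge> 0"
  unfolding chain_lyap_def by (intro sum_nonneg) auto

lemma Re_cnj_mult_affine_le:
  fixes w z r :: complex and \<sigma> :: real
  assumes "\<sigma> > 0" "Re r \<le> -\<sigma>"
  shows "2 * Re (cnj w * (r * w + z)) \<le> -\<sigma> * (cmod w)^2 + (cmod z)^2 / \<sigma>"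
proof -
  have a: "Re (cnj w * (r * w)) = Re r * (cmod w)^2"
    using cmod_power2[of w] by (simp add: power2_eq_square algebra_simps)
  have b: "Re (cnj w * z) \<le> cmod w * cmod z"
    using complex_Re_le_cmod[of "cnj w * z"] by (simp add: norm_mult)
  have c: "2 * (cmod w * cmod z) \<le> \<sigma> * (cmod w)^2 + (cmod z)^2 / \<sigma>"
  proof -
    have "0 \<le> (\<sigma> * cmod w - cmod z)^2 / \<sigma>" using assms by simp
    also have "(\<sigma> * cmod w - cmod z)^2 / \<sigma> = \<sigma> * (cmod w)^2 + (cmod z)^2 / \<sigma> - 2 * (cmod w * cmod z)"
      using assms by (simp add: field_simps power2_eq_square)
    finally show ?thesis by simp
  qed
  have d: "Re r * (cmod w)^2 \<le> -\<sigma> * (cmod w)^2" using assms by (intro mult_right_mono) auto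
  have "2 * Re (cnj w * (r * w + z)) = 2 * (Re r * (cmod w)^2) + 2 * Re (cnj w * z)"
    using a by (simp add: distrib_left)
  then show ?thesis using b c d by linarith
qed

lemma weighted_shift_sum_le:
  fixes a :: "nat \<Rightarrow> real"
  assumes "\<sigma> > 0" "\<rho> > 0" "\<rho> * \<sigma>\<^sup>2 \<ge> 2" "\<And>j. a j \<ge> 0"
  shows "(\<Sum>j<m. \<rho>^j * a (Suc j) / \<sigma>) \<le> (\<sigma>/2) * (\<Sum>j<Suc m. \<rho>^j * a j)"
proof -
  have "\<rho>^j * a (Suc j) / \<sigma> \<le> (\<sigma>/2) * (\<rho>^(Suc j) * a (Suc j))" for j
  proof -
    have "\<rho>^j * 2 \<le> \<rho>^j * (\<rho> * \<sigma>\<^sup>2)" using assms by (intro mult_left_mono) auto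
    then have "\<rho>^j / \<sigma> \<le> (\<sigma>/2) * \<rho>^(Suc j)" using assms(1) by (simp add: field_simps power2_eq_square)
    from mult_right_mono[OF this assms(4)[of "Suc j"]] show ?thesis by (simp add: algebra_simps)
  qed
  then have "(\<Sum>j<m. \<rho>^j * a (Suc j) / \<sigma>) \<le> (\<Sum>j<m. (\<sigma>/2) * (\<rho>^(Suc j) * a (Suc j)))"
    by (intro sum_mono)
  also have "\<dots> = (\<sigma>/2) * (\<Sum>j<m. \<rho>^(Suc j) * a (Suc j))"
    by (simp add: sum_distrib_left)
  also have "\<dots> \<le> (\<sigma>/2) * (\<rho>^0 * a 0 + (\<Sum>j<m. \<rho>^(Suc j) * a (Suc j)))"
    using assms by (intro mult_left_mono) auto
  also have "\<dots> = (\<sigma>/2) * (\<Sum>j<Suc m. \<rho>^j * a j)"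
    by (subst sum.lessThan_Suc_shift) simp
  finally show ?thesis .
qed

lemma chain_lyap_deriv_le:
  assumes n1: "n \<ge> 1" and s0: "\<sigma> > 0" and r1: "\<rho> \<ge> 1" and rs: "\<rho> * \<sigma>^2 \<ge> 2"
    and rt: "\<And>j. j < n \<Longrightarrow> Re (rt j) \<le> -\<sigma>"
    and st: "\<And>j. j < n \<Longrightarrow> poly_pairing n (root_poly rt j) g = rt j * poly_pairing n (root_poly rt j) y
           + (if Suc j < n then poly_pairing n (root_poly rt (Suc j)) y else complex_of_real \<theta>)"
  shows "chain_lyap_deriv n rt \<rho> y g \<le> -(\<sigma>/2) * chain_lyap n rt \<rho> y + \<rho>^(n-1) * \<theta>^2 / \<sigma>"
proof -
  define w where "w j = poly_pairing n (root_poly rt j) y" for j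
  define z where "z j = (if Suc j < n then w (Suc j) else complex_of_real \<theta>)" for j
  obtain m where m: "n = Suc m" using n1 by (cases n) auto
  have r0: "\<rho> > 0" using r1 by simp
  have "chain_lyap_deriv n rt \<rho> y g = (\<Sum>j<n. \<rho>^j * (2 * Re (cnj (w j) * (rt j * w j + z j))))"
    unfolding chain_lyap_deriv_def using st by (intro sum.cong) (auto simp: w_def z_def)
  also have "\<dots> \<le> (\<Sum>j<n. \<rho>^j * (-\<sigma> * (cmod (w j))^2 + (cmod (z j))^2 / \<sigma>))"
    using r0 by (intro sum_mono mult_left_mono Re_cnj_mult_affine_le s0 rt) auto
  also have "\<dots> = (\<Sum>j<n. -\<sigma> * (\<rho>^j * (cmod (w j))^2)) + (\<Sum>j<n. \<rho>^j * (cmod (z j))^2 / \<sigma>)"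
    by (simp only: sum.distrib[symmetric]) (intro sum.cong; simp add: algebra_simps)
  also have "(\<Sum>j<n. -\<sigma> * (\<rho>^j * (cmod (w j))^2)) = -\<sigma> * chain_lyap n rt \<rho> y"
    by (simp add: chain_lyap_def w_def sum_distrib_left)
  also have "(\<Sum>j<n. \<rho>^j * (cmod (z j))^2 / \<sigma>)
      = (\<Sum>j<m. \<rho>^j * (cmod (w (Suc j)))^2 / \<sigma>) + \<rho>^m * \<theta>^2 / \<sigma>"
    by (simp add: m z_def)
  also have "(\<Sum>j<m. \<rho>^j * (cmod (w (Suc j)))^2 / \<sigma>) \<le> (\<sigma>/2) * chain_lyap n rt \<rho> y"
    using weighted_shift_sum_le[of \<sigma> \<rho> "\<lambda>j. (cmod (w j))\<^sup>2" m] s0 r0 rs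
    by (simp add: chain_lyap_def w_def m)
  finally show ?thesis using m by simp
qed

definition root_poly_bound :: "nat \<Rightarrow> (nat \<Rightarrow> complex) \<Rightarrow> real" where
  "root_poly_bound n rt = (\<Sum>j<n. \<Sum>k<n. cmod (coeff (root_poly rt j) k))"

lemma norm1_eq_sum_lessThan: "norm1 n y = (\<Sum>k<n. \<bar>y (Suc k)\<bar>)"
  unfolding norm1_def using sum.atLeast1_atMost_eq[of "\<lambda>i. \<bar>y i\<bar>" n] by simp

lemma norm1_nonneg: "norm1 n y \<ge> 0" unfolding norm1_def by (intro sum_nonneg) auto

lemma abs_le_norm1: "1 \<le> i \<Longrightarrow> i \<le> n \<Longrightarrow> \<bar>y i\<bar> \<le> norm1 n y"
  unfolding norm1_def by (rule member_le_sum) auto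

lemma norm_coeff_root_poly_le_bound: "j < n \<Longrightarrow> k < n \<Longrightarrow> cmod (coeff (root_poly rt j) k) \<le> root_poly_bound n rt"
proof -
  assume a: "j < n" "k < n"
  have "cmod (coeff (root_poly rt j) k) \<le> (\<Sum>k<n. cmod (coeff (root_poly rt j) k))"
    using a by (intro member_le_sum) auto
  also have "\<dots> \<le> root_poly_bound n rt" unfolding root_poly_bound_def using a
    by (intro member_le_sum[where f="\<lambda>j. \<Sum>k<n. cmod (coeff (root_poly rt j) k)"]) (auto intro: sum_nonneg)
  finally show ?thesis .
qed

lemma sum_norm_coeff_root_poly_le_bound: "j < n \<Longrightarrow> (\<Sum>k<n. cmod (coeff (root_poly rt j) k)) \<le> root_poly_bound n rt"
  unfolding root_poly_bound_def by (intro member_le_sum[where f="\<lambda>j. \<Sum>k<n. cmod (coeff (root_poly rt j) k)"]) (auto intro: sum_nonneg)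

lemma root_poly_bound_nonneg: "root_poly_bound n rt \<ge> 0" unfolding root_poly_bound_def by (intro sum_nonneg) auto

lemma norm_poly_pairing_le: "cmod (poly_pairing n q y) \<le> (\<Sum>k<n. cmod (coeff q k)) * norm1 n y"
proof -
  have "cmod (poly_pairing n q y) \<le> (\<Sum>k<n. cmod (coeff q k) * \<bar>y (Suc k)\<bar>)"
    unfolding poly_pairing_def by (rule order.trans[OF norm_sum]) (simp add: norm_mult)
  also have "\<dots> \<le> (\<Sum>k<n. cmod (coeff q k) * norm1 n y)"
    by (intro sum_mono mult_left_mono abs_le_norm1) auto
  finally show ?thesis by (simp add: sum_distrib_right)
qed

lemma chain_lyap_le_norm1:
  assumes "\<rho> \<ge> 0"
  shows "chain_lyap n rt \<rho> y \<le> (\<Sum>j<n. \<rho>^j) * (root_poly_bound n rt)^2 * (norm1 n y)^2"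
proof -
  have "chain_lyap n rt \<rho> y \<le> (\<Sum>j<n. \<rho>^j * (root_poly_bound n rt * norm1 n y)^2)"
    unfolding chain_lyap_def
  proof (intro sum_mono mult_left_mono)
    fix j assume j: "j \<in> {..<n}"
    have "cmod (poly_pairing n (root_poly rt j) y) \<le> root_poly_bound n rt * norm1 n y"
      using norm_poly_pairing_le[of n "root_poly rt j" y] sum_norm_coeff_root_poly_le_bound[of j n rt] j norm1_nonneg[of n y]
      by (meson lessThan_iff mult_right_mono order.trans)
    then show "(cmod (poly_pairing n (root_poly rt j) y))^2 \<le> (root_poly_bound n rt * norm1 n y)^2"
      by (intro power_mono) auto
  qed (use assms in auto)
  also have "\<dots> = (\<Sum>j<n. \<rho>^j) * (root_poly_bound n rt)^2 * (norm1 n y)^2"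
    by (simp add: sum_distrib_right power_mult_distrib mult.assoc)
  finally show ?thesis .
qed

lemma norm_poly_pairing_le_sqrt_chain_lyap:
  assumes "\<rho> \<ge> 1" "j < n"
  shows "cmod (poly_pairing n (root_poly rt j) y) \<le> sqrt (chain_lyap n rt \<rho> y)"
proof -
  have "(cmod (poly_pairing n (root_poly rt j) y))\<^sup>2 \<le> \<rho>^j * (cmod (poly_pairing n (root_poly rt j) y))\<^sup>2"
    using one_le_power[OF assms(1), of j] by (simp add: mult_le_cancel_right1)
  also have "\<dots> \<le> chain_lyap n rt \<rho> y" unfolding chain_lyap_def using assms
    by (intro member_le_sum[where f="\<lambda>j. \<rho>^j * (cmod (poly_pairing n (root_poly rt j) y))\<^sup>2"]) auto
  finally show ?thesis by (simp add: real_le_rsqrt)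
qed

text \<open>Since the partial products are monic, the forms can be inverted triangularly.\<close>
lemma abs_le_poly_pairing_root_poly:
  assumes j: "j < n"
  shows "\<bar>y (Suc j)\<bar> \<le> cmod (poly_pairing n (root_poly rt j) y) + root_poly_bound n rt * (\<Sum>k<j. \<bar>y (Suc k)\<bar>)"
proof -
  define S where "S = (\<Sum>k<j. coeff (root_poly rt j) k * complex_of_real (y (Suc k)))"
  have "poly_pairing n (root_poly rt j) y = (\<Sum>k<Suc j. coeff (root_poly rt j) k * complex_of_real (y (Suc k)))"
    unfolding poly_pairing_def using j by (intro sum.mono_neutral_right) (auto simp: coeff_root_poly_above)
  also have "\<dots> = S + complex_of_real (y (Suc j))"
    using lead_coeff_root_poly[of rt j] by (simp add: S_def degree_root_poly)
  finally have "\<bar>y (Suc j)\<bar> = cmod (poly_pairing n (root_poly rt j) y - S)"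
    by (metis add_diff_cancel_left' norm_of_real)
  also have "\<dots> \<le> cmod (poly_pairing n (root_poly rt j) y) + cmod S"
    by (rule norm_triangle_ineq4)
  also have "cmod S \<le> (\<Sum>k<j. root_poly_bound n rt * \<bar>y (Suc k)\<bar>)"
    unfolding S_def
  proof (rule order.trans[OF norm_sum], intro sum_mono)
    fix k assume "k \<in> {..<j}"
    then show "cmod (coeff (root_poly rt j) k * complex_of_real (y (Suc k))) \<le> root_poly_bound n rt * \<bar>y (Suc k)\<bar>"
      using j norm_coeff_root_poly_le_bound[of j n k rt] by (simp add: norm_mult mult_right_mono)
  qed
  finally show ?thesis by (simp add: sum_distrib_left)
qed

lemma sum_abs_le_poly_pairing_root_poly:
  assumes "j \<le> n"
  shows "(\<Sum>k<j. \<bar>y (Suc k)\<bar>) \<le> (1 + root_poly_bound n rt)^j * (\<Sum>i<j. cmod (poly_pairing n (root_poly rt i) y))"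
  using assms
proof (induction j)
  case 0 then show ?case by simp
next
  case (Suc j)
  define B where "B = root_poly_bound n rt"
  define w where "w i = cmod (poly_pairing n (root_poly rt i) y)" for i
  have B0: "B \<ge> 0" using root_poly_bound_nonneg by (simp add: B_def)
  have IH: "(\<Sum>k<j. \<bar>y (Suc k)\<bar>) \<le> (1+B)^j * (\<Sum>i<j. w i)"
    using Suc by (simp add: B_def w_def)
  have "(\<Sum>k<Suc j. \<bar>y (Suc k)\<bar>) \<le> (1+B) * (\<Sum>k<j. \<bar>y (Suc k)\<bar>) + w j"
    using abs_le_poly_pairing_root_poly[of j n y rt] Suc.prems by (simp add: B_def w_def algebra_simps)
  also have "\<dots> \<le> (1+B) * ((1+B)^j * (\<Sum>i<j. w i)) + (1+B)^(Suc j) * w j"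
    using IH B0 one_le_power[of "1+B" "Suc j"]
    by (intro add_mono mult_left_mono) (auto simp: w_def mult_le_cancel_right1)
  also have "\<dots> = (1+B)^(Suc j) * (\<Sum>i<Suc j. w i)" by (simp add: algebra_simps)
  finally show ?case by (simp add: B_def w_def)
qed

lemma norm1_le_chain_lyap:
  assumes "\<rho> \<ge> 1"
  shows "(norm1 n y)\<^sup>2 \<le> ((1 + root_poly_bound n rt)^n * real n)\<^sup>2 * chain_lyap n rt \<rho> y"
proof -
  define B where "B = root_poly_bound n rt"
  define V where "V = chain_lyap n rt \<rho> y"
  have "norm1 n y \<le> (1+B)^n * (\<Sum>i<n. cmod (poly_pairing n (root_poly rt i) y))"
    using sum_abs_le_poly_pairing_root_poly[of n n y rt] by (simp add: norm1_eq_sum_lessThan B_def)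
  also have "\<dots> \<le> (1+B)^n * (\<Sum>i<n. sqrt V)"
    using root_poly_bound_nonneg[of n rt] norm_poly_pairing_le_sqrt_chain_lyap[OF assms]
    by (intro mult_left_mono sum_mono) (auto simp: B_def V_def)
  finally have "(norm1 n y)\<^sup>2 \<le> ((1+B)^n * real n * sqrt V)\<^sup>2"
    using norm1_nonneg by (intro power_mono) (auto simp: mult.assoc)
  also have "\<dots> = ((1+B)^n * real n)\<^sup>2 * V"
    using chain_lyap_nonneg[of \<rho> n rt y] assms by (simp add: power_mult_distrib V_def)
  finally show ?thesis by (simp add: B_def V_def)
qed

lemma chain_lyap_deriv_scale: "chain_lyap_deriv n rt \<rho> y (\<lambda>i. c * g i) = c * chain_lyap_deriv n rt \<rho> y g"
  by (simp add: chain_lyap_deriv_def poly_pairing_scale sum_distrib_left algebra_simps)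

lemma chain_lyap_deriv_cong: "(\<And>i. 1 \<le> i \<Longrightarrow> i \<le> n \<Longrightarrow> g i = g' i) \<Longrightarrow> chain_lyap_deriv n rt \<rho> y g = chain_lyap_deriv n rt \<rho> y g'"
  unfolding chain_lyap_deriv_def using poly_pairing_cong[of n g g'] by simp

lemma Re_poly_pairing: "Re (poly_pairing n q y) = (\<Sum>k<n. Re (coeff q k) * y (Suc k))"
  by (simp add: poly_pairing_def)

lemma Im_poly_pairing: "Im (poly_pairing n q y) = (\<Sum>k<n. Im (coeff q k) * y (Suc k))"
  by (simp add: poly_pairing_def)

lemma has_real_derivative_chain_lyap:
  assumes d: "\<And>i. 1 \<le> i \<Longrightarrow> i \<le> n \<Longrightarrow> ((\<lambda>t. x t i) has_real_derivative x' i) (at t)"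
  shows "((\<lambda>t. chain_lyap n rt \<rho> (x t)) has_real_derivative chain_lyap_deriv n rt \<rho> (x t) x') (at t)"
proof -
  have dre: "((\<lambda>t. Re (poly_pairing n q (x t))) has_real_derivative Re (poly_pairing n q x')) (at t)" for q
    unfolding Re_poly_pairing by (intro DERIV_sum DERIV_cmult d) auto
  have dim: "((\<lambda>t. Im (poly_pairing n q (x t))) has_real_derivative Im (poly_pairing n q x')) (at t)" for q
    unfolding Im_poly_pairing by (intro DERIV_sum DERIV_cmult d) auto
  have e1: "chain_lyap n rt \<rho> (x s) = (\<Sum>j<n. \<rho>^j * (Re (poly_pairing n (root_poly rt j) (x s)) * Re (poly_pairing n (root_poly rt j) (x s))
        + Im (poly_pairing n (root_poly rt j) (x s)) * Im (poly_pairing n (root_poly rt j) (x s))))" for s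
    unfolding chain_lyap_def cmod_power2 by (simp add: power2_eq_square)
  have e2: "chain_lyap_deriv n rt \<rho> (x t) x' = (\<Sum>j<n. \<rho>^j * (Re (poly_pairing n (root_poly rt j) x') * Re (poly_pairing n (root_poly rt j) (x t))
        + Re (poly_pairing n (root_poly rt j) x') * Re (poly_pairing n (root_poly rt j) (x t))
        + (Im (poly_pairing n (root_poly rt j) x') * Im (poly_pairing n (root_poly rt j) (x t))
        + Im (poly_pairing n (root_poly rt j) x') * Im (poly_pairing n (root_poly rt j) (x t)))))"
    unfolding chain_lyap_deriv_def by (intro sum.cong) (auto simp: algebra_simps)
  show ?thesis unfolding e1 e2
    by (intro DERIV_sum DERIV_cmult DERIV_add DERIV_mult dre dim)
qed

lemma continuous_on_chain_lyap:
  assumes "\<And>i. 1 \<le> i \<Longrightarrow> i \<le> n \<Longrightarrow> continuous_on S (\<lambda>t. y t i)"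
  shows "continuous_on S (\<lambda>t. chain_lyap n rt \<rho> (y t))"
proof -
  have "continuous_on S (\<lambda>t. y t (Suc k))" if "k < n" for k using assms that by auto
  then show ?thesis
    unfolding chain_lyap_def cmod_power2 Re_poly_pairing Im_poly_pairing
    by (intro continuous_intros) auto
qed

section \<open>Homogeneity of the reduced closed loop\<close>

text \<open>The closed loop reduced to the sliding surface. For \<delta> = 1/\<alpha> - 1 the exponents are
  \<alpha>_i = 1 / r_i with weights r_i = 1 + (n + 1 - i) \<delta>, and the field is homogeneous of degree
  -\<delta> with respect to these weights (lemma hom_field_dilation); \<delta> = 0 gives the linear chain.\<close>
definition hom_weight :: "nat \<Rightarrow> real \<Rightarrow> nat \<Rightarrow> real" where
  "hom_weight n \<delta> i = 1 + real (n + 1 - i) * \<delta>"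

definition hom_field :: "nat \<Rightarrow> (nat \<Rightarrow> real) \<Rightarrow> real \<Rightarrow> (nat \<Rightarrow> real) \<Rightarrow> (nat \<Rightarrow> real)" where
  "hom_field n C \<delta> y = (\<lambda>i. if i < n then y (Suc i)
     else - (\<Sum>j=1..n. C j * signed_powr (1 / hom_weight n \<delta> j) (y j)))"

definition dilation :: "nat \<Rightarrow> real \<Rightarrow> real \<Rightarrow> (nat \<Rightarrow> real) \<Rightarrow> (nat \<Rightarrow> real)" where
  "dilation n \<delta> \<mu> y = (\<lambda>i. \<mu> powr hom_weight n \<delta> i * y i)"

lemma hom_weight_pos: "\<delta> \<ge> 0 \<Longrightarrow> hom_weight n \<delta> i > 0"
  unfolding hom_weight_def by (intro add_pos_nonneg) auto

lemma hom_field_dilation: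
  assumes "\<mu> > 0" "\<delta> \<ge> 0" "1 \<le> i" "i \<le> n"
  shows "dilation n \<delta> \<mu> (hom_field n C \<delta> y) i = \<mu> powr \<delta> * hom_field n C \<delta> (dilation n \<delta> \<mu> y) i"
proof (cases "i < n")
  case True
  then have "hom_weight n \<delta> i = \<delta> + hom_weight n \<delta> (Suc i)"
    by (simp add: hom_weight_def Suc_diff_le algebra_simps)
  then show ?thesis using True by (simp add: dilation_def hom_field_def powr_add)
next
  case False
  then have i: "i = n" using assms by simp
  have "signed_powr (1 / hom_weight n \<delta> j) (\<mu> powr hom_weight n \<delta> j * y j)
      = \<mu> * signed_powr (1 / hom_weight n \<delta> j) (y j)" for j
    by (rule signed_powr_homogeneous[OF assms(1) hom_weight_pos[OF assms(2)]])
  then have "(\<Sum>j=1..n. C j * signed_powr (1 / hom_weight n \<delta> j) (\<mu> powr hom_weight n \<delta> j * y j))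
      = \<mu> * (\<Sum>j=1..n. C j * signed_powr (1 / hom_weight n \<delta> j) (y j))"
    by (simp add: sum_distrib_left algebra_simps)
  moreover have "\<mu> powr hom_weight n \<delta> n = \<mu> powr \<delta> * \<mu>"
    using assms by (simp add: hom_weight_def powr_add)
  ultimately show ?thesis using i by (simp add: dilation_def hom_field_def)
qed

lemma dilation_dilation:
  "a > 0 \<Longrightarrow> b > 0 \<Longrightarrow> dilation n \<delta> a (dilation n \<delta> b y) = dilation n \<delta> (a * b) y"
  by (simp add: dilation_def powr_mult mult.assoc)

lemma norm1_dilation_le:
  assumes "\<mu> > 0" "\<And>i. 1 \<le> i \<Longrightarrow> i \<le> n \<Longrightarrow> \<mu> powr hom_weight n \<delta> i \<le> M"
  shows "norm1 n (dilation n \<delta> \<mu> y) \<le> M * norm1 n y"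
proof -
  have "norm1 n (dilation n \<delta> \<mu> y) = (\<Sum>i=1..n. \<mu> powr hom_weight n \<delta> i * \<bar>y i\<bar>)"
    unfolding norm1_def dilation_def by (simp add: abs_mult)
  also have "\<dots> \<le> (\<Sum>i=1..n. M * \<bar>y i\<bar>)"
    using assms by (intro sum_mono mult_right_mono) auto
  finally show ?thesis by (simp add: norm1_def sum_distrib_left)
qed

lemma chain_lyap_deriv_dilation:
  assumes "\<mu> > 0" "\<delta> \<ge> 0"
  shows "chain_lyap_deriv n rt \<rho> y (dilation n \<delta> \<mu> (hom_field n C \<delta> x))
    = \<mu> powr \<delta> * chain_lyap_deriv n rt \<rho> y (hom_field n C \<delta> (dilation n \<delta> \<mu> x))"
proof -
  have "chain_lyap_deriv n rt \<rho> y (dilation n \<delta> \<mu> (hom_field n C \<delta> x))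
      = chain_lyap_deriv n rt \<rho> y (\<lambda>i. \<mu> powr \<delta> * hom_field n C \<delta> (dilation n \<delta> \<mu> x) i)"
    by (rule chain_lyap_deriv_cong) (simp add: hom_field_dilation[OF assms])
  then show ?thesis by (simp add: chain_lyap_deriv_scale)
qed

section \<open>Comparison arguments for scalar functions\<close>

lemma last_exit_time:
  fixes h :: "real \<Rightarrow> real"
  assumes "a \<le> b" and cont: "continuous_on {a..b} h" and "h a \<le> c" "c < h b"
  obtains s where "a \<le> s" "s < b" "h s \<le> c" "\<And>t. s < t \<Longrightarrow> t \<le> b \<Longrightarrow> c < h t"
proof -
  define S where "S = {a..b} \<inter> h -` {..c}"
  have "closed S" unfolding S_def by (rule continuous_closed_preimage[OF cont]) auto
  moreover have "a \<in> S" using assms by (simp add: S_def)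
  moreover have bdd: "bdd_above S" unfolding S_def by (rule bdd_aboveI[of _ b]) auto
  ultimately have "Sup S \<in> S" using closed_contains_Sup by blast
  moreover have "c < h t" if "Sup S < t" "t \<le> b" for t
    using cSup_upper[OF _ bdd, of t] that \<open>Sup S \<in> S\<close> by (force simp: S_def)
  ultimately show ?thesis
    using that[of "Sup S"] assms by (fastforce simp: S_def order.order_iff_strict)
qed

lemma DERIV_le_imp_diff_le:
  fixes h :: "real \<Rightarrow> real"
  assumes "a \<le> b" and cont: "continuous_on {a..b} h"
    and der: "\<And>t. a < t \<Longrightarrow> t < b \<Longrightarrow> (h has_real_derivative h' t) (at t)"
    and le: "\<And>t. a < t \<Longrightarrow> t < b \<Longrightarrow> h' t \<le> M"
  shows "h b - h a \<le> M * (b - a)"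
proof -
  have "(\<lambda>t. h t - M * t) b \<le> (\<lambda>t. h t - M * t) a"
  proof (rule DERIV_nonpos_imp_decreasing_open[OF assms(1)])
    fix t assume "a < t" "t < b"
    then show "\<exists>y. ((\<lambda>t. h t - M * t) has_real_derivative y) (at t) \<and> y \<le> 0"
      using der le by (intro exI[of _ "h' t - M"]) (auto intro!: derivative_eq_intros)
  qed (use cont in \<open>intro continuous_intros\<close>)
  then show ?thesis by (simp add: algebra_simps)
qed

text \<open>Continuity keeps h from jumping over the band (1, 2), in which it cannot increase.\<close>
lemma level_invariant:
  fixes h :: "real \<Rightarrow> real"
  assumes "a \<le> b" and cont: "continuous_on {a..b} h"
    and der: "\<And>t. a < t \<Longrightarrow> t < b \<Longrightarrow> (h has_real_derivative h' t) (at t)"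
    and nonpos: "\<And>t. a < t \<Longrightarrow> t < b \<Longrightarrow> 1 < h t \<Longrightarrow> h t < 2 \<Longrightarrow> h' t \<le> 0"
    and "h a \<le> 1"
  shows "h b \<le> 1"
proof (rule ccontr)
  assume "\<not> h b \<le> 1"
  then obtain s where s: "a \<le> s" "s < b" "h s \<le> 1" and above: "\<And>t. s < t \<Longrightarrow> t \<le> b \<Longrightarrow> 1 < h t"
    using last_exit_time[OF assms(1) cont \<open>h a \<le> 1\<close>] by (metis not_le)
  obtain d where d: "d > 0" "\<And>t. t \<in> {a..b} \<Longrightarrow> dist t s < d \<Longrightarrow> dist (h t) (h s) < 1"
    using cont s unfolding continuous_on_iff by (metis atLeastAtMost_iff less_imp_le zero_less_one)
  define t' where "t' = min b (s + d/2)"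
  have t': "s < t'" "t' \<le> b" using s d by (auto simp: t'_def)
  have "h t' - h s \<le> 0 * (t' - s)"
  proof (rule DERIV_le_imp_diff_le)
    show "continuous_on {s..t'} h" by (rule continuous_on_subset[OF cont]) (use s t' in auto)
    fix t assume t: "s < t" "t < t'"
    show "(h has_real_derivative h' t) (at t)" using t t' s by (intro der) auto
    have "dist (h t) (h s) < 1" using t t' s d by (intro d(2)) (auto simp: t'_def dist_real_def)
    then show "h' t \<le> 0" using t t' s above[of t] by (intro nonpos) (auto simp: dist_real_def)
  qed (use t' in simp)
  then show False using above[OF t'] s by simp
qed

section \<open>Uniform decay on a shell and finite-time convergence\<close>

locale hurwitz_chain =
  fixes n :: nat and C :: "nat \<Rightarrow> real" and rt :: "nat \<Rightarrow> complex" and \<sigma> :: real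
  assumes n_ge_1: "n \<ge> 1" and char_poly_eq: "root_poly rt n = char_poly n C" and \<sigma>_pos: "\<sigma> > 0"
    and Re_roots_le: "\<And>j. j < n \<Longrightarrow> Re (rt j) \<le> -\<sigma>"
begin

text \<open>V is comparable to the squared 1-norm with constants Lam and Kap. The bound delta_max
  keeps the deviation of hom_field from the linear chain, which is at most \<delta> * Th on
  {V \<le> 2}, small enough for the decay -\<sigma>/2 * V of the linear part to dominate on the shell
  {v0 \<le> V \<le> 2}.\<close>
definition "rho = max 1 (2 / \<sigma>\<^sup>2)"
definition "Lam = (\<Sum>j<n. rho^j) * (root_poly_bound n rt)\<^sup>2"
definition "Kap = ((1 + root_poly_bound n rt)^n * real n)\<^sup>2"
definition "v0 = 1 / (16 * Lam * Kap + 1)"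
definition "Th = (\<Sum>i=1..n. \<bar>C i\<bar>) * 2 * real n * (1 + 2 * Kap)"
definition "delta_max = min (1 / real n) (\<sigma>\<^sup>2 * v0 / (4 * rho^(n-1) * (Th\<^sup>2 + 1)))"
definition "decay = \<sigma> * v0 / 4"

abbreviation "V \<equiv> chain_lyap n rt rho"
abbreviation "DV \<equiv> chain_lyap_deriv n rt rho"

lemma rho_ge_1: "rho \<ge> 1"
  by (simp add: rho_def)

lemma rho_sigma_sq: "rho * \<sigma>\<^sup>2 \<ge> 2"
proof -
  have "rho \<ge> 2 / \<sigma>\<^sup>2" by (simp add: rho_def)
  then show ?thesis using \<sigma>_pos by (simp add: field_simps)
qed

lemma Lam_nonneg: "Lam \<ge> 0"
  unfolding Lam_def using rho_ge_1 by (intro mult_nonneg_nonneg sum_nonneg) auto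

lemma Kap_nonneg: "Kap \<ge> 0"
  by (simp add: Kap_def)

lemma v0_pos: "v0 > 0"
proof -
  have "0 \<le> 16 * Lam * Kap" using Lam_nonneg Kap_nonneg by simp
  then show ?thesis unfolding v0_def by (intro divide_pos_pos) linarith+
qed

lemma v0_le_1: "v0 \<le> 1"
proof -
  have "1 \<le> 16 * Lam * Kap + 1" using Lam_nonneg Kap_nonneg by simp
  then show ?thesis unfolding v0_def by (subst divide_le_eq_1_pos) linarith+
qed

lemma delta_max_pos: "delta_max > 0"
  unfolding delta_max_def using n_ge_1 \<sigma>_pos v0_pos rho_ge_1
  by (auto intro!: divide_pos_pos mult_pos_pos add_nonneg_pos)

lemma delta_max_le: "delta_max \<le> 1 / real n"
  by (simp add: delta_max_def)

lemma decay_pos: "decay > 0"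
  using \<sigma>_pos v0_pos by (simp add: decay_def)

lemma V_nonneg: "V y \<ge> 0"
  using chain_lyap_nonneg rho_ge_1 by simp

lemma norm1_sq_le_V: "(norm1 n y)\<^sup>2 \<le> Kap * V y"
  using norm1_le_chain_lyap[OF rho_ge_1] by (simp add: Kap_def)

lemma V_le_norm1_sq: "V y \<le> Lam * (norm1 n y)\<^sup>2"
  using chain_lyap_le_norm1[of rho n rt y] rho_ge_1 by (simp add: Lam_def)

lemma sq_le_V:
  assumes "1 \<le> i" "i \<le> n"
  shows "(y i)\<^sup>2 \<le> Kap * V y"
proof -
  have "(y i)\<^sup>2 \<le> (norm1 n y)\<^sup>2"
    using abs_le_norm1[OF assms] by (metis abs_ge_zero power2_abs power_mono)
  then show ?thesis using norm1_sq_le_V[of y] by simp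
qed

lemma hom_weight_bounds:
  assumes "0 \<le> \<delta>" "\<delta> \<le> delta_max" "1 \<le> i"
  shows "1 \<le> hom_weight n \<delta> i" "hom_weight n \<delta> i - 1 \<le> real n * \<delta>" "hom_weight n \<delta> i \<le> 2"
proof -
  have "real (n + 1 - i) * \<delta> \<le> real n * \<delta>"
    using assms by (intro mult_right_mono) auto
  moreover have "\<delta> \<le> 1 / real n" using assms delta_max_le by linarith
  then have "real n * \<delta> \<le> 1" using n_ge_1 by (simp add: field_simps)
  ultimately show "1 \<le> hom_weight n \<delta> i" "hom_weight n \<delta> i - 1 \<le> real n * \<delta>" "hom_weight n \<delta> i \<le> 2"
    using assms by (simp_all add: hom_weight_def)
qed

lemma nonlinearity_bound:
  assumes \<delta>: "0 \<le> \<delta>" "\<delta> \<le> delta_max" and "V y \<le> 2"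
  shows "\<bar>\<Sum>i=1..n. C i * (signed_powr (1 / hom_weight n \<delta> i) (y i) - y i)\<bar> \<le> \<delta> * Th"
proof -
  have "\<bar>signed_powr (1 / hom_weight n \<delta> i) (y i) - y i\<bar> \<le> 2 * real n * (1 + 2 * Kap) * \<delta>"
    if i: "1 \<le> i" "i \<le> n" for i
  proof -
    define r where "r = hom_weight n \<delta> i"
    have r: "1 \<le> r" "r - 1 \<le> real n * \<delta>" "r \<le> 2" using hom_weight_bounds[OF \<delta> i(1)] by (auto simp: r_def)
    have "1 - 1/r \<le> r - 1"
      using mult_left_mono[of 1 r "r - 1"] r by (simp add: field_simps)
    then have "1 - 1/r \<le> real n * \<delta>" using r by simp
    moreover have "(y i)\<^sup>2 \<le> 2 * Kap"
      using sq_le_V[OF i, of y] mult_left_mono[OF \<open>V y \<le> 2\<close> Kap_nonneg] by linarith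
    moreover have "1/2 \<le> 1/r" "1/r \<le> 1" using r by (auto simp: field_simps)
    ultimately have "2 * (1 - 1/r) * (1 + (y i)\<^sup>2) \<le> 2 * (real n * \<delta>) * (1 + 2 * Kap)"
      by (intro mult_mono) auto
    with signed_powr_close_to_id[OF \<open>1/2 \<le> 1/r\<close> \<open>1/r \<le> 1\<close>, of "y i"] show ?thesis
      by (simp add: r_def algebra_simps)
  qed
  then have "(\<Sum>i=1..n. \<bar>C i\<bar> * \<bar>signed_powr (1 / hom_weight n \<delta> i) (y i) - y i\<bar>)
      \<le> (\<Sum>i=1..n. \<bar>C i\<bar> * (2 * real n * (1 + 2 * Kap) * \<delta>))"
    by (intro sum_mono mult_left_mono) auto
  also have "\<dots> = \<delta> * Th"
    by (simp only: sum_distrib_right[symmetric]) (simp add: Th_def algebra_simps)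
  finally show ?thesis
    using sum_abs[of "\<lambda>i. C i * (signed_powr (1 / hom_weight n \<delta> i) (y i) - y i)" "{1..n}"]
    by (simp add: abs_mult)
qed

lemma nonlinearity_contribution_le:
  assumes "0 \<le> \<delta>" "\<delta> \<le> delta_max" "\<bar>\<theta>\<bar> \<le> \<delta> * Th"
  shows "rho^(n-1) * \<theta>\<^sup>2 / \<sigma> \<le> decay"
proof -
  have "\<delta> \<le> 1" using assms delta_max_le n_ge_1 by (smt (verit) divide_le_eq_1 of_nat_1 of_nat_mono)
  have "\<theta>\<^sup>2 \<le> (\<delta> * Th)\<^sup>2" using assms(3) by (metis abs_ge_zero power2_abs power_mono)
  also have "\<dots> \<le> \<delta> * (Th\<^sup>2 + 1)"
    using \<open>\<delta> \<le> 1\<close> assms(1) mult_left_le_one_le[of "Th\<^sup>2" \<delta>]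
    by (simp add: power_mult_distrib power2_eq_square[of \<delta>] mult.assoc mult_left_mono)
  also have "\<dots> \<le> \<sigma>\<^sup>2 * v0 / (4 * rho^(n-1) * (Th\<^sup>2 + 1)) * (Th\<^sup>2 + 1)"
    using assms(2) by (intro mult_right_mono) (auto simp: delta_max_def)
  also have "\<dots> = \<sigma>\<^sup>2 * v0 / (4 * rho^(n-1))"
  proof -
    have "Th\<^sup>2 + 1 \<noteq> 0" using zero_le_power2[of Th] by linarith
    then show ?thesis by simp
  qed
  finally have "rho^(n-1) * \<theta>\<^sup>2 / \<sigma> \<le> rho^(n-1) * (\<sigma>\<^sup>2 * v0 / (4 * rho^(n-1))) / \<sigma>"
    using rho_ge_1 \<sigma>_pos by (intro divide_right_mono mult_left_mono) auto
  also have "\<dots> = decay"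
    using rho_ge_1 \<sigma>_pos by (simp add: decay_def field_simps power2_eq_square)
  finally show ?thesis .
qed

lemma V_deriv_le_on_shell:
  assumes \<delta>: "0 \<le> \<delta>" "\<delta> \<le> delta_max" and "v0 \<le> V y" "V y \<le> 2"
  shows "DV y (hom_field n C \<delta> y) \<le> - decay"
proof -
  define \<theta> where "\<theta> = - (\<Sum>i=1..n. C i * (signed_powr (1 / hom_weight n \<delta> i) (y i) - y i))"
  have "hom_field n C \<delta> y (Suc k) = y (Suc (Suc k))" if "Suc k < n" for k
    using that by (simp add: hom_field_def)
  moreover have "hom_field n C \<delta> y n = - (\<Sum>i=1..n. C i * y i) + \<theta>"
    by (simp add: hom_field_def \<theta>_def sum_subtractf algebra_simps)
  ultimately have "DV y (hom_field n C \<delta> y) \<le> -(\<sigma>/2) * V y + rho^(n-1) * \<theta>\<^sup>2 / \<sigma>"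
    by (intro chain_lyap_deriv_le n_ge_1 \<sigma>_pos rho_ge_1 rho_sigma_sq Re_roots_le
        poly_pairing_root_poly_step[OF n_ge_1 char_poly_eq])
  moreover have "rho^(n-1) * \<theta>\<^sup>2 / \<sigma> \<le> decay"
    using nonlinearity_bound[OF \<delta> \<open>V y \<le> 2\<close>] nonlinearity_contribution_le[OF \<delta>] by (simp add: \<theta>_def)
  moreover have "-(\<sigma>/2) * V y \<le> -(\<sigma>/2) * v0" using \<open>v0 \<le> V y\<close> \<sigma>_pos by simp
  ultimately show ?thesis unfolding decay_def by linarith
qed

lemma v0_le_V_of_dilation:
  assumes \<delta>: "0 \<le> \<delta>" "\<delta> \<le> delta_max" and "V (dilation n \<delta> 2 y) > 1"
  shows "V y \<ge> v0"
proof -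
  have "norm1 n (dilation n \<delta> 2 y) \<le> 4 * norm1 n y"
  proof (rule norm1_dilation_le)
    fix i assume "1 \<le> i" "i \<le> n"
    then have "(2::real) powr hom_weight n \<delta> i \<le> 2 powr 2"
      using hom_weight_bounds[OF \<delta>] by (intro powr_mono) auto
    then show "(2::real) powr hom_weight n \<delta> i \<le> 4" by simp
  qed simp
  then have "(norm1 n (dilation n \<delta> 2 y))\<^sup>2 \<le> 16 * (norm1 n y)\<^sup>2"
    using norm1_nonneg power_mono[of "norm1 n (dilation n \<delta> 2 y)" "4 * norm1 n y" 2]
    by (simp add: power_mult_distrib)
  then have "1 < Lam * (16 * (norm1 n y)\<^sup>2)"
    using assms(3) V_le_norm1_sq[of "dilation n \<delta> 2 y"] mult_left_mono[OF _ Lam_nonneg] by fastforce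
  also have "\<dots> \<le> Lam * (16 * (Kap * V y))"
    using norm1_sq_le_V[of y] Lam_nonneg by (intro mult_left_mono) auto
  finally have "1 \<le> V y * (16 * Lam * Kap + 1)"
    using V_nonneg[of y] by (simp add: algebra_simps)
  moreover have "0 < 16 * Lam * Kap + 1"
    using Lam_nonneg Kap_nonneg by (simp add: add_nonneg_pos)
  ultimately show ?thesis by (simp add: v0_def pos_divide_le_eq)
qed

end

lemma hurwitz_chain_exists:
  assumes "n \<ge> 1" "hurwitz (char_poly n C)"
  obtains rt \<sigma> where "hurwitz_chain n C rt \<sigma>"
proof -
  obtain rt where rt: "root_poly rt n = char_poly n C" "\<And>i. i < n \<Longrightarrow> Re (rt i) < 0"
    using char_poly_eq_root_poly[OF assms(2)] by blast
  define \<sigma> where "\<sigma> = Min ((\<lambda>i. - Re (rt i)) ` {..<n})"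
  have "0 \<in> {..<n}" using assms(1) by simp
  then have "{..<n} \<noteq> {}" by blast
  then have "\<sigma> > 0" using rt(2) by (auto simp: \<sigma>_def Min_gr_iff)
  moreover have "Re (rt j) \<le> -\<sigma>" if "j < n" for j
  proof -
    have "\<sigma> \<le> - Re (rt j)" unfolding \<sigma>_def using that by (intro Min_le) auto
    then show ?thesis by simp
  qed
  ultimately have "hurwitz_chain n C rt \<sigma>"
    using assms(1) rt(1) by unfold_locales auto
  then show ?thesis by (rule that)
qed

locale hom_chain_trajectory = hurwitz_chain +
  fixes \<delta> :: real and x :: "real \<Rightarrow> nat \<Rightarrow> real"
  assumes \<delta>_pos: "0 < \<delta>" and \<delta>_le: "\<delta> \<le> delta_max"
    and continuous_x: "\<And>i. 1 \<le> i \<Longrightarrow> i \<le> n \<Longrightarrow> continuous_on {0..} (\<lambda>t. x t i)"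
    and deriv_x: "\<And>t i. 0 < t \<Longrightarrow> 1 \<le> i \<Longrightarrow> i \<le> n \<Longrightarrow>
      ((\<lambda>s. x s i) has_real_derivative hom_field n C \<delta> (x t) i) (at t)"
begin

definition scaled_V :: "real \<Rightarrow> real \<Rightarrow> real" where
  "scaled_V \<mu> t = V (dilation n \<delta> (1/\<mu>) (x t))"

definition scaled_V_deriv :: "real \<Rightarrow> real \<Rightarrow> real" where
  "scaled_V_deriv \<mu> t =
     (1/\<mu>) powr \<delta> * DV (dilation n \<delta> (1/\<mu>) (x t)) (hom_field n C \<delta> (dilation n \<delta> (1/\<mu>) (x t)))"

lemma continuous_on_scaled_V: "continuous_on {0..} (scaled_V \<mu>)"
  unfolding scaled_V_def dilation_def
  by (intro continuous_on_chain_lyap continuous_intros continuous_x)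

lemma has_real_derivative_scaled_V:
  assumes "\<mu> > 0" "t > 0"
  shows "(scaled_V \<mu> has_real_derivative scaled_V_deriv \<mu> t) (at t)"
proof -
  have "(scaled_V \<mu> has_real_derivative
      DV (dilation n \<delta> (1/\<mu>) (x t)) (dilation n \<delta> (1/\<mu>) (hom_field n C \<delta> (x t)))) (at t)"
    unfolding scaled_V_def[abs_def]
    by (rule has_real_derivative_chain_lyap) (unfold dilation_def, intro DERIV_cmult deriv_x assms)
  then show ?thesis
    using chain_lyap_deriv_dilation[of "1/\<mu>" \<delta>] assms \<delta>_pos by (simp add: scaled_V_deriv_def)
qed

lemma scaled_V_deriv_le_on_shell:
  assumes "\<mu> > 0" "v0 \<le> scaled_V \<mu> t" "scaled_V \<mu> t \<le> 2"
  shows "scaled_V_deriv \<mu> t \<le> - ((1/\<mu>) powr \<delta> * decay)"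
  using mult_left_mono[OF V_deriv_le_on_shell[OF less_imp_le[OF \<delta>_pos] \<delta>_le], of _ "(1/\<mu>) powr \<delta>"] assms
  by (simp add: scaled_V_def scaled_V_deriv_def)

lemma scaled_V_stays_le_1:
  assumes "\<mu> > 0" "0 \<le> T" "scaled_V \<mu> T \<le> 1" "T \<le> t"
  shows "scaled_V \<mu> t \<le> 1"
proof (rule level_invariant[of T t "scaled_V \<mu>" "scaled_V_deriv \<mu>"])
  show "T \<le> t" "scaled_V \<mu> T \<le> 1" using assms by auto
  show "continuous_on {T..t} (scaled_V \<mu>)"
    by (rule continuous_on_subset[OF continuous_on_scaled_V]) (use assms in auto)
  fix s assume s: "T < s" "s < t"
  show "(scaled_V \<mu> has_real_derivative scaled_V_deriv \<mu> s) (at s)"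
    using s assms by (intro has_real_derivative_scaled_V) auto
  assume "1 < scaled_V \<mu> s" "scaled_V \<mu> s < 2"
  then have "scaled_V_deriv \<mu> s \<le> - ((1/\<mu>) powr \<delta> * decay)"
    using v0_le_1 assms by (intro scaled_V_deriv_le_on_shell) auto
  then show "scaled_V_deriv \<mu> s \<le> 0" using decay_pos by (smt (verit) mult_nonneg_nonneg powr_ge_zero)
qed

lemma v0_le_scaled_V_of_half:
  assumes "\<mu> > 0" "scaled_V (\<mu>/2) t > 1"
  shows "v0 \<le> scaled_V \<mu> t"
proof -
  have "scaled_V (\<mu>/2) t = V (dilation n \<delta> 2 (dilation n \<delta> (1/\<mu>) (x t)))"
    using assms(1) by (simp add: scaled_V_def dilation_dilation)
  then show ?thesis
    using v0_le_V_of_dilation[OF less_imp_le[OF \<delta>_pos] \<delta>_le] assms(2) by (simp add: scaled_V_def)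
qed

text \<open>While the scale-\<mu>/2 value stays above 1, the scale-\<mu> value is in the shell and
  decreases at rate \<mu>^-\<delta> decay, so this cannot last longer than \<mu>^\<delta> / decay.\<close>
lemma scaled_V_halving_time:
  assumes "\<mu> > 0" "0 \<le> T" "scaled_V \<mu> T \<le> 1"
  shows "\<exists>T'. T \<le> T' \<and> T' \<le> T + \<mu> powr \<delta> / decay \<and> scaled_V (\<mu>/2) T' \<le> 1"
proof (rule ccontr)
  define \<tau> where "\<tau> = \<mu> powr \<delta> / decay"
  assume "\<not> ?thesis"
  then have shell: "v0 \<le> scaled_V \<mu> s" if "T \<le> s" "s \<le> T + \<tau>" for s
    using that assms(1) by (intro v0_le_scaled_V_of_half) (auto simp: \<tau>_def)
  have "\<tau> > 0" using assms(1) decay_pos by (simp add: \<tau>_def)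
  have "scaled_V \<mu> (T + \<tau>) - scaled_V \<mu> T \<le> - ((1/\<mu>) powr \<delta> * decay) * ((T + \<tau>) - T)"
  proof (rule DERIV_le_imp_diff_le)
    show "continuous_on {T..T + \<tau>} (scaled_V \<mu>)"
      by (rule continuous_on_subset[OF continuous_on_scaled_V]) (use assms in auto)
    fix s assume s: "T < s" "s < T + \<tau>"
    show "(scaled_V \<mu> has_real_derivative scaled_V_deriv \<mu> s) (at s)"
      using s assms by (intro has_real_derivative_scaled_V) auto
    show "scaled_V_deriv \<mu> s \<le> - ((1/\<mu>) powr \<delta> * decay)"
      using s assms shell[of s] scaled_V_stays_le_1[OF assms(1-3), of s]
      by (intro scaled_V_deriv_le_on_shell) auto
  qed (use \<open>\<tau> > 0\<close> in simp)
  also have "\<dots> = -1"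
    using assms(1) decay_pos by (simp add: \<tau>_def powr_divide)
  finally have "scaled_V \<mu> (T + \<tau>) \<le> 0" using assms(3) by simp
  then show False using shell[of "T + \<tau>"] v0_pos \<open>\<tau> > 0\<close> by simp
qed

definition "initial_scale = 1 + Lam * (norm1 n (x 0))\<^sup>2"

lemma initial_scale_ge_1: "initial_scale \<ge> 1"
  using Lam_nonneg by (simp add: initial_scale_def)

lemma scaled_V_le_1_initially: "scaled_V initial_scale 0 \<le> 1"
proof -
  define \<mu> where "\<mu> = initial_scale"
  have "\<mu> \<ge> 1" using initial_scale_ge_1 by (simp add: \<mu>_def)
  have "norm1 n (dilation n \<delta> (1/\<mu>) (x 0)) \<le> (1/\<mu>) * norm1 n (x 0)"
  proof (rule norm1_dilation_le)
    fix i assume "1 \<le> i" "i \<le> n"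
    then have "(1/\<mu>) powr hom_weight n \<delta> i \<le> (1/\<mu>) powr 1"
      using hom_weight_bounds[OF less_imp_le[OF \<delta>_pos] \<delta>_le] \<open>\<mu> \<ge> 1\<close> by (intro powr_mono') auto
    then show "(1/\<mu>) powr hom_weight n \<delta> i \<le> 1/\<mu>" using \<open>\<mu> \<ge> 1\<close> by simp
  qed (use \<open>\<mu> \<ge> 1\<close> in simp)
  then have "scaled_V \<mu> 0 \<le> Lam * ((1/\<mu>) * norm1 n (x 0))\<^sup>2"
    using V_le_norm1_sq[of "dilation n \<delta> (1/\<mu>) (x 0)"] norm1_nonneg Lam_nonneg
    by (smt (verit) scaled_V_def mult_left_mono power_mono)
  also have "\<dots> = (\<mu> - 1) / \<mu>\<^sup>2" by (simp add: \<mu>_def initial_scale_def power2_eq_square field_simps)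
  also have "\<dots> \<le> 1"
  proof -
    have "\<mu> \<le> \<mu> * \<mu>" using \<open>\<mu> \<ge> 1\<close> by (simp add: mult_le_cancel_left1)
    then have "\<mu> - 1 \<le> \<mu>\<^sup>2" unfolding power2_eq_square by linarith
    then show ?thesis using \<open>\<mu> \<ge> 1\<close> by (subst divide_le_eq_1_pos) auto
  qed
  finally show ?thesis by (simp add: \<mu>_def)
qed

lemma sq_le_of_scaled_V_le_1:
  assumes "0 < \<mu>" "\<mu> \<le> 1" "scaled_V \<mu> t \<le> 1" "1 \<le> i" "i \<le> n"
  shows "(x t i)\<^sup>2 \<le> \<mu>\<^sup>2 * Kap"
proof -
  define r where "r = hom_weight n \<delta> i"
  define y where "y = dilation n \<delta> (1/\<mu>) (x t)"
  have "(y i)\<^sup>2 \<le> Kap" using sq_le_V[OF assms(4,5), of y] assms(3) Kap_nonneg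
    by (smt (verit) mult_left_le scaled_V_def y_def)
  moreover have "x t i = \<mu> powr r * y i"
    using assms(1) by (simp add: y_def dilation_def r_def powr_divide)
  moreover have "\<mu> powr r \<le> \<mu>"
    using powr_mono'[of 1 r \<mu>] hom_weight_bounds[OF less_imp_le[OF \<delta>_pos] \<delta>_le assms(4)] assms
    by (simp add: r_def)
  moreover have "(\<mu> powr r)\<^sup>2 \<le> \<mu>\<^sup>2" using \<open>\<mu> powr r \<le> \<mu>\<close> by (intro power_mono) auto
  ultimately show ?thesis by (simp add: power_mult_distrib mult_mono)
qed

lemma scaled_V_le_1_at_halved_scale:
  "\<exists>T. 0 \<le> T \<and> T \<le> (\<Sum>j<m. (initial_scale / 2^j) powr \<delta> / decay) \<and> scaled_V (initial_scale / 2^m) T \<le> 1"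
proof (induction m)
  case 0
  show ?case using scaled_V_le_1_initially by (intro exI[of _ 0]) simp
next
  case (Suc m)
  define \<mu> where "\<mu> = initial_scale / 2^m"
  have "\<mu> > 0" using initial_scale_ge_1 by (simp add: \<mu>_def)
  obtain T where T: "0 \<le> T" "T \<le> (\<Sum>j<m. (initial_scale / 2^j) powr \<delta> / decay)" "scaled_V \<mu> T \<le> 1"
    using Suc unfolding \<mu>_def by blast
  obtain T' where T': "T \<le> T'" "T' \<le> T + \<mu> powr \<delta> / decay" "scaled_V (\<mu>/2) T' \<le> 1"
    using scaled_V_halving_time[OF \<open>\<mu> > 0\<close> T(1,3)] by blast
  have "\<mu> / 2 = initial_scale / 2^Suc m" by (simp add: \<mu>_def)
  with T'(3) have "scaled_V (initial_scale / 2^Suc m) T' \<le> 1" by simp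
  then show ?case using T T'(1,2) by (intro exI[of _ T']) (simp add: \<mu>_def)
qed

lemma x_eq_0_of_scaled_V_le_1:
  assumes "\<And>m. scaled_V (initial_scale / 2^m) t \<le> 1" "1 \<le> i" "i \<le> n"
  shows "x t i = 0"
proof -
  define L where "L m = initial_scale / 2^m" for m :: nat
  have "L \<longlonglongrightarrow> 0" unfolding L_def by (intro LIMSEQ_divide_realpow_zero) simp
  then have small: "eventually (\<lambda>m. L m < 1) sequentially" by (rule order_tendstoD) simp
  have "(x t i)\<^sup>2 \<le> (L m)\<^sup>2 * Kap" if "L m < 1" for m
    by (rule sq_le_of_scaled_V_le_1) (use that assms initial_scale_ge_1 in \<open>simp_all add: L_def\<close>)
  moreover have "(\<lambda>m. (L m)\<^sup>2 * Kap) \<longlonglongrightarrow> 0"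
    using \<open>L \<longlonglongrightarrow> 0\<close> by (auto intro!: tendsto_eq_intros)
  ultimately have "(x t i)\<^sup>2 \<le> 0"
    by (intro tendsto_le[OF _ _ tendsto_const]) (use small in \<open>auto elim: eventually_mono\<close>)
  then show ?thesis by simp
qed

theorem finite_time_convergence: "\<exists>T\<ge>0. \<forall>t\<ge>T. \<forall>i\<in>{1..n}. x t i = 0"
proof -
  define a where "a j = (initial_scale / 2^j) powr \<delta> / decay" for j :: nat
  have "((2::real)^j) powr \<delta> = (2 powr \<delta>)^j" for j
  proof -
    have "((2::real)^j) powr \<delta> = (2 powr real j) powr \<delta>" by (simp add: powr_realpow)
    also have "\<dots> = (2 powr \<delta>)^j" by (simp add: powr_powr powr_power mult.commute)
    finally show ?thesis .
  qed
  then have a_eq: "a = (\<lambda>j. initial_scale powr \<delta> / decay * (1 / 2 powr \<delta>)^j)"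
    by (simp add: fun_eq_iff a_def powr_divide power_one_over)
  have "1 < (2::real) powr \<delta>" using \<delta>_pos by simp
  then have "summable a"
    unfolding a_eq by (intro summable_mult summable_geometric) simp
  define T0 where "T0 = suminf a"
  have sum_le: "(\<Sum>j<m. a j) \<le> T0" for m
    unfolding T0_def using decay_pos by (intro sum_le_suminf[OF \<open>summable a\<close>]) (auto simp: a_def)
  have "scaled_V (initial_scale / 2^m) t \<le> 1" if "T0 \<le> t" for m t
  proof -
    obtain T where T: "0 \<le> T" "T \<le> (\<Sum>j<m. a j)" "scaled_V (initial_scale / 2^m) T \<le> 1"
      using scaled_V_le_1_at_halved_scale[of m] unfolding a_def by blast
    have "initial_scale / 2^m > 0" using initial_scale_ge_1 by simp
    from scaled_V_stays_le_1[OF this T(1,3)] show ?thesis using T(2) sum_le[of m] that by simp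
  qed
  then have "\<forall>t\<ge>T0. \<forall>i\<in>{1..n}. x t i = 0" by (auto intro: x_eq_0_of_scaled_V_le_1)
  moreover have "0 \<le> T0" using sum_le[of 0] by simp
  ultimately show ?thesis by blast
qed

end

section \<open>The sliding surface\<close>

lemma continuous_on_of_has_integral:
  fixes F h :: "real \<Rightarrow> real"
  assumes int: "\<And>t. t \<ge> 0 \<Longrightarrow> (h has_integral (F t - F 0)) {0..t}"
  shows "continuous_on {0..} F"
proof -
  have "continuous_on {0..T} F" if "T \<ge> 0" for T
  proof (rule continuous_on_eq)
    have "h integrable_on {0..T}" using int[OF that] by blast
    then show "continuous_on {0..T} (\<lambda>u. F 0 + integral {0..u} h)"
      by (intro continuous_intros indefinite_integral_continuous_1)
    show "F 0 + integral {0..u} h = F u" if "u \<in> {0..T}" for u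
      using integral_unique[OF int[of u]] that by simp
  qed
  then show ?thesis
    unfolding continuous_on_eq_continuous_within
  proof (intro ballI)
    fix t :: real assume "t \<in> {0..}"
    then have "continuous (at t within {0..t+1}) F"
      using \<open>\<And>T. T \<ge> 0 \<Longrightarrow> continuous_on {0..T} F\<close>[of "t+1"]
      by (simp add: continuous_on_eq_continuous_within)
    moreover have "at t within {0..t+1} = at t within {0..}"
      by (rule at_within_nhd[of t "{..<t+1}"]) auto
    ultimately show "continuous (at t within {0..}) F" by simp
  qed
qed

lemma has_real_derivative_of_has_integral:
  fixes F h :: "real \<Rightarrow> real"
  assumes int: "\<And>t. t \<ge> 0 \<Longrightarrow> (h has_integral (F t - F 0)) {0..t}"
    and "continuous_on {0..} h" "t > 0"
  shows "(F has_real_derivative h t) (at t)"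
proof -
  have "((\<lambda>u. integral {0..u} h) has_real_derivative h t) (at t within {0..t+1})"
    by (rule integral_has_real_derivative[OF continuous_on_subset[OF assms(2)]]) (use assms(3) in auto)
  then have "((\<lambda>u. F 0 + integral {0..u} h) has_real_derivative h t) (at t)"
    using at_within_Icc_at[of 0 t "t+1"] assms(3) by (auto intro!: derivative_eq_intros)
  then show ?thesis
  proof (rule has_field_derivative_transform_within_open[where S="{0<..}"])
    show "F 0 + integral {0..u} h = F u" if "u \<in> {0<..}" for u
      using integral_unique[OF int[of u]] that by simp
  qed (use assms(3) in auto)
qed

lemma has_integral_le_const_AE:
  fixes g :: "real \<Rightarrow> real"
  assumes "(g has_integral I) {a..b}" "a \<le> b"
    and "AE x in lebesgue. x \<in> {a<..b} \<longrightarrow> g x \<le> M"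
  shows "I \<le> M * (b - a)"
proof -
  obtain N where N: "N \<in> null_sets lebesgue" "\<And>x. x \<notin> N \<Longrightarrow> x \<in> {a<..b} \<Longrightarrow> g x \<le> M"
    using AE_E3[OF assms(3)] by auto
  define g' where "g' x = (if x \<in> N \<union> {a} then M else g x)" for x
  have "negligible (N \<union> {a})" using N(1) negligible_iff_null_sets by auto
  then have "(g' has_integral I) {a..b}"
    by (rule has_integral_spike[OF _ _ assms(1)]) (simp add: g'_def)
  moreover have "g' x \<le> M" if "x \<in> {a..b}" for x
    using N(2)[of x] that by (auto simp: g'_def)
  ultimately have "I \<le> Henstock_Kurzweil_Integration.content {a..b} *\<^sub>R M"
    by (rule has_integral_le[OF _ has_integral_const_real])
  then show ?thesis using assms(2) by (simp add: algebra_simps)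
qed

lemma reaching_law_nonpos:
  fixes s g :: "real \<Rightarrow> real"
  assumes "s 0 = 0" and int: "\<And>t. t \<ge> 0 \<Longrightarrow> (g has_integral s t) {0..t}"
    and "AE \<tau> in lebesgue. \<tau> > 0 \<longrightarrow> s \<tau> > 0 \<longrightarrow> g \<tau> \<le> -\<eta>"
    and "\<eta> > 0" "t \<ge> 0"
  shows "s t \<le> 0"
proof (rule ccontr)
  assume "\<not> s t \<le> 0"
  have "continuous_on {0..} s" using int assms(1) by (intro continuous_on_of_has_integral) auto
  then have cont: "continuous_on {0..t} s" by (rule continuous_on_subset) auto
  obtain t0 where t0: "0 \<le> t0" "t0 < t" "s t0 \<le> 0" and pos: "\<And>u. t0 < u \<Longrightarrow> u \<le> t \<Longrightarrow> 0 < s u"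
    by (rule last_exit_time[of 0 t s 0]) (use \<open>t \<ge> 0\<close> cont \<open>\<not> s t \<le> 0\<close> assms(1) in auto)
  have g_int: "g integrable_on {0..t}" using int[OF \<open>t \<ge> 0\<close>] by blast
  have "integral {0..t0} g + integral {t0..t} g = integral {0..t} g"
    using t0 by (intro Henstock_Kurzweil_Integration.integral_combine g_int) auto
  then have "integral {t0..t} g = s t - s t0"
    using integral_unique[OF int[of t]] integral_unique[OF int[of t0]] t0 \<open>t \<ge> 0\<close> by simp
  moreover have "g integrable_on {t0..t}"
    by (rule integrable_subinterval_real[OF g_int]) (use t0 in auto)
  ultimately have "(g has_integral (s t - s t0)) {t0..t}"
    using has_integral_integral by metis
  moreover have "AE \<tau> in lebesgue. \<tau> \<in> {t0<..t} \<longrightarrow> g \<tau> \<le> -\<eta>"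
    using assms(3) by eventually_elim (use t0 pos in auto)
  ultimately have "s t - s t0 \<le> -\<eta> * (t - t0)"
    using t0 by (intro has_integral_le_const_AE) auto
  moreover have "0 < \<eta> * (t - t0)" using \<open>\<eta> > 0\<close> t0 by simp
  ultimately show False using t0 \<open>\<not> s t \<le> 0\<close> by linarith
qed

lemma sliding_variable_vanishes:
  fixes s g :: "real \<Rightarrow> real"
  assumes "s 0 = 0" and int: "\<And>t. t \<ge> 0 \<Longrightarrow> (g has_integral s t) {0..t}"
    and "AE \<tau> in lebesgue. \<tau> > 0 \<longrightarrow> (s \<tau> > 0 \<longrightarrow> g \<tau> \<le> -\<eta>) \<and> (s \<tau> < 0 \<longrightarrow> g \<tau> \<ge> \<eta>)"
    and "\<eta> > 0" "t \<ge> 0"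
  shows "s t = 0"
proof -
  have pos: "AE \<tau> in lebesgue. \<tau> > 0 \<longrightarrow> s \<tau> > 0 \<longrightarrow> g \<tau> \<le> -\<eta>"
    using assms(3) by eventually_elim auto
  have neg: "AE \<tau> in lebesgue. \<tau> > 0 \<longrightarrow> - s \<tau> > 0 \<longrightarrow> - g \<tau> \<le> -\<eta>"
    using assms(3) by eventually_elim auto
  have "s t \<le> 0" using assms(1) int pos assms(4,5) by (rule reaching_law_nonpos)
  moreover have "- s 0 = 0" using assms(1) by simp
  then have "- s t \<le> 0"
    using has_integral_neg[OF int] neg assms(4,5) by (rule reaching_law_nonpos[where s="\<lambda>t. - s t"])
  ultimately show ?thesis by simp
qed

text \<open>The discontinuous term dominates the matched disturbance \<Delta>, so the sliding variable
  x_n - z, which starts at 0, stays there.\<close>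
lemma sliding_mode_from_start:
  fixes xn z w S v \<Delta> :: "real \<Rightarrow> real"
  assumes "z 0 = xn 0"
    and w: "\<And>t. t \<ge> 0 \<Longrightarrow> (w has_integral (xn t - xn 0)) {0..t}"
    and z: "\<And>t. t \<ge> 0 \<Longrightarrow> (z has_real_derivative - S t) (at t within {0..})"
    and loop: "AE \<tau> in lebesgue. \<tau> \<ge> 0 \<longrightarrow> w \<tau> = - S \<tau> + \<Delta> \<tau> + v \<tau>"
    and \<Delta>: "\<And>\<tau>. \<tau> \<ge> 0 \<Longrightarrow> \<bar>\<Delta> \<tau>\<bar> \<le> \<Delta>max"
    and v: "\<And>\<tau>. \<tau> \<ge> 0 \<Longrightarrow> v \<tau> \<in> (\<lambda>\<sigma>. - k * \<sigma>) ` Sgn (xn \<tau> - z \<tau>)"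
    and "\<Delta>max + \<eta> \<le> k" "\<eta> > 0" "t \<ge> 0"
  shows "xn t = z t"
proof -
  have int: "((\<lambda>\<tau>. w \<tau> + S \<tau>) has_integral (xn t - z t)) {0..t}" if "t \<ge> 0" for t
  proof -
    have "((\<lambda>\<tau>. - S \<tau>) has_integral (z t - z 0)) {0..t}"
    proof (rule fundamental_theorem_of_calculus[OF that])
      fix u assume "u \<in> {0..t}"
      then have "(z has_real_derivative - S u) (at u within {0..t})"
        by (intro DERIV_subset[OF z]) auto
      then show "(z has_vector_derivative - S u) (at u within {0..t})"
        by (simp add: has_real_derivative_iff_has_vector_derivative)
    qed
    from has_integral_diff[OF w[OF that] this] show ?thesis using assms(1) by simp
  qed
  have reaching: "AE \<tau> in lebesgue. \<tau> > 0 \<longrightarrow>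
      (xn \<tau> - z \<tau> > 0 \<longrightarrow> w \<tau> + S \<tau> \<le> -\<eta>) \<and> (xn \<tau> - z \<tau> < 0 \<longrightarrow> w \<tau> + S \<tau> \<ge> \<eta>)"
    using loop
  proof eventually_elim
    case (elim \<tau>)
    show ?case
    proof (intro impI conjI)
      assume "\<tau> > 0" "xn \<tau> - z \<tau> > 0"
      then show "w \<tau> + S \<tau> \<le> -\<eta>" using elim v[of \<tau>] \<Delta>[of \<tau>] \<open>\<Delta>max + \<eta> \<le> k\<close> by (auto simp: Sgn_def)
    next
      assume "\<tau> > 0" "xn \<tau> - z \<tau> < 0"
      then show "w \<tau> + S \<tau> \<ge> \<eta>" using elim v[of \<tau>] \<Delta>[of \<tau>] \<open>\<Delta>max + \<eta> \<le> k\<close> by (auto simp: Sgn_def)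
    qed
  qed
  have "xn t - z t = 0"
    by (rule sliding_variable_vanishes[where s="\<lambda>t. xn t - z t", OF _ int reaching \<open>\<eta> > 0\<close> \<open>t \<ge> 0\<close>])
      (simp add: assms(1))
  then show ?thesis by simp
qed

lemma alpha_aux_eq:
  fixes d :: real assumes "d \<ge> 0"
  shows "alpha_aux (1 / (1 + d)) m = (1 / (1 + real (m + 1) * d), 1 / (1 + real m * d))"
proof (induction m)
  case 0 then show ?case by simp
next
  case (Suc m)
  define A where "A = 1 + real m * d"
  define B where "B = 1 + real (m + 1) * d"
  have "A > 0" "B > 0" using assms by (auto simp: A_def B_def add_pos_nonneg)
  moreover have "2 * B - A = 1 + real (m + 2) * d" by (simp add: A_def B_def algebra_simps)
  ultimately have "(1/B) * (1/A) / (2 * (1/A) - 1/B) = 1 / (1 + real (m + 2) * d)"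
    by (simp add: field_simps)
  moreover have "alpha_aux (1 / (1 + d)) (Suc m) = ((1/B) * (1/A) / (2 * (1/A) - 1/B), 1/B)"
    using Suc by (simp add: A_def B_def)
  ultimately show ?case by (simp add: B_def add.commute)
qed

lemma alphas_eq_hom_weight:
  assumes "0 < \<alpha>" "\<alpha> < 1" "i \<le> n"
  shows "alphas n \<alpha> i = 1 / hom_weight n (1/\<alpha> - 1) i"
proof -
  have "alpha_aux \<alpha> (n - i) = alpha_aux (1 / (1 + (1/\<alpha> - 1))) (n - i)" by simp
  also have "\<dots> = (1 / (1 + real (n - i + 1) * (1/\<alpha> - 1)), 1 / (1 + real (n - i) * (1/\<alpha> - 1)))"
    using assms by (intro alpha_aux_eq) (simp add: field_simps)
  finally show ?thesis using assms(3) by (simp add: alphas_def hom_weight_def Suc_diff_le)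
qed

lemma closed_loop_stays_on_sliding_surface:
  fixes x :: "real \<Rightarrow> nat \<Rightarrow> real" and z w v S :: "real \<Rightarrow> real"
  assumes f: "\<forall>y\<in>vecs n. \<forall>t\<ge>0. f y t = fn y t + f\<Delta> y t"
    and b: "\<forall>y\<in>vecs n. \<forall>t\<ge>0. b y t \<noteq> 0"
    and f\<Delta>: "\<forall>y\<in>vecs n. \<forall>t\<ge>0. \<bar>f\<Delta> y t\<bar> \<le> fmax"
    and d0: "\<forall>y\<in>vecs n. \<forall>t\<ge>0. \<bar>d0 y t\<bar> \<le> dmax"
    and "\<eta> > 0"
    and x: "\<forall>t\<ge>0. x t \<in> vecs n"
    and w_int: "\<forall>t\<ge>0. (w has_integral (x t n - x 0 n)) {0..t}"
    and "z 0 = x 0 n"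
    and z: "\<forall>t\<ge>0. (z has_real_derivative - S t) (at t within {0..})"
    and v: "\<forall>t\<ge>0. v t \<in> (\<lambda>\<sigma>. - (\<eta> + dmax + fmax) * \<sigma>) ` Sgn (x t n - z t)"
    and loop: "AE \<tau> in lebesgue. \<tau> \<ge> 0 \<longrightarrow>
      w \<tau> = f (x \<tau>) \<tau> + b (x \<tau>) \<tau> * (inverse (b (x \<tau>) \<tau>) * ((- fn (x \<tau>) \<tau> - S \<tau>) + v \<tau>))
        + d0 (x \<tau>) \<tau>"
    and "t \<ge> 0"
  shows "x t n = z t"
proof -
  have "AE \<tau> in lebesgue. \<tau> \<ge> 0 \<longrightarrow> w \<tau> = - S \<tau> + (f\<Delta> (x \<tau>) \<tau> + d0 (x \<tau>) \<tau>) + v \<tau>"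
    using loop
  proof eventually_elim
    case (elim \<tau>)
    show ?case
    proof
      assume "\<tau> \<ge> 0"
      then have "b (x \<tau>) \<tau> \<noteq> 0" "f (x \<tau>) \<tau> = fn (x \<tau>) \<tau> + f\<Delta> (x \<tau>) \<tau>" using f b x by auto
      then have "b (x \<tau>) \<tau> * (inverse (b (x \<tau>) \<tau>) * X) = X" for X by (simp add: mult.assoc[symmetric])
      with elim \<open>\<tau> \<ge> 0\<close> \<open>f (x \<tau>) \<tau> = fn (x \<tau>) \<tau> + f\<Delta> (x \<tau>) \<tau>\<close>
      show "w \<tau> = - S \<tau> + (f\<Delta> (x \<tau>) \<tau> + d0 (x \<tau>) \<tau>) + v \<tau>" by simp
    qed
  qed
  moreover have "\<bar>f\<Delta> (x \<tau>) \<tau> + d0 (x \<tau>) \<tau>\<bar> \<le> fmax + dmax" if "\<tau> \<ge> 0" for \<tau>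
    using f\<Delta> d0 x that by (smt (verit))
  ultimately show ?thesis
    using sliding_mode_from_start[of z "\<lambda>t. x t n" w S _ v "fmax + dmax" "\<eta> + dmax + fmax" \<eta> t]
      \<open>z 0 = x 0 n\<close> w_int z v \<open>\<eta> > 0\<close> \<open>t \<ge> 0\<close> by simp
qed

lemma continuous_on_chain_trajectory:
  fixes x :: "real \<Rightarrow> nat \<Rightarrow> real" and w :: "real \<Rightarrow> real"
  assumes x_int: "\<forall>i\<in>{1..<n}. \<forall>t\<ge>0. ((\<lambda>\<tau>. x \<tau> (i + 1)) has_integral (x t i - x 0 i)) {0..t}"
    and w_int: "\<forall>t\<ge>0. (w has_integral (x t n - x 0 n)) {0..t}"
    and "1 \<le> i" "i \<le> n"
  shows "continuous_on {0..} (\<lambda>t. x t i)"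
proof (cases "i < n")
  case True
  then show ?thesis using x_int assms(3) by (intro continuous_on_of_has_integral) auto
next
  case False
  then show ?thesis using w_int assms(4) by (intro continuous_on_of_has_integral[of w]) auto
qed

lemma has_real_derivative_chain_trajectory:
  fixes x :: "real \<Rightarrow> nat \<Rightarrow> real" and z w S :: "real \<Rightarrow> real"
  assumes x_int: "\<forall>i\<in>{1..<n}. \<forall>t\<ge>0. ((\<lambda>\<tau>. x \<tau> (i + 1)) has_integral (x t i - x 0 i)) {0..t}"
    and w_int: "\<forall>t\<ge>0. (w has_integral (x t n - x 0 n)) {0..t}"
    and z: "\<forall>t\<ge>0. (z has_real_derivative - S t) (at t within {0..})"
    and on_surface: "\<And>t. t \<ge> 0 \<Longrightarrow> x t n = z t"
    and "0 < t" "1 \<le> i" "i \<le> n"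
  shows "((\<lambda>s. x s i) has_real_derivative (if i < n then x t (i + 1) else - S t)) (at t)"
proof (cases "i < n")
  case True
  have "\<And>t. t \<ge> 0 \<Longrightarrow> ((\<lambda>\<tau>. x \<tau> (i + 1)) has_integral (x t i - x 0 i)) {0..t}"
    using x_int True assms(6) by auto
  moreover have "continuous_on {0..} (\<lambda>\<tau>. x \<tau> (i + 1))"
    using continuous_on_chain_trajectory[OF x_int w_int, of "i + 1"] True by simp
  ultimately show ?thesis
    using has_real_derivative_of_has_integral[of "\<lambda>\<tau>. x \<tau> (i + 1)", OF _ _ \<open>0 < t\<close>] True by simp
next
  case False
  have "(z has_real_derivative - S t) (at t within {0..})" using z assms(5) by simp
  moreover have "at t within {0..} = at t"
    using assms(5) by (intro at_within_open_subset[where S="{0<..}"]) auto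
  ultimately have "(z has_real_derivative - S t) (at t)" by simp
  then have "((\<lambda>s. x s n) has_real_derivative - S t) (at t)"
    by (rule has_field_derivative_transform_within_open[where S="{0<..}"]) (use assms(5) on_surface in auto)
  then show ?thesis using False assms(7) by simp
qed

context hurwitz_chain
begin

definition "eps = delta_max / (1 + delta_max)"

lemma eps_bounds: "0 < eps" "eps < 1"
  using delta_max_pos by (simp_all add: eps_def)

lemma alpha_bounds:
  assumes "1 - eps < \<alpha>" "\<alpha> < 1"
  shows "0 < \<alpha>" "0 < 1/\<alpha> - 1" "1/\<alpha> - 1 \<le> delta_max"
proof -
  have "1 - eps = 1 / (1 + delta_max)" using delta_max_pos by (simp add: eps_def field_simps)
  then have \<alpha>_gt: "1 / (1 + delta_max) < \<alpha>" using assms by simp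
  moreover have "0 < 1 / (1 + delta_max)" using delta_max_pos by simp
  ultimately show "0 < \<alpha>" by linarith
  have "1 < \<alpha> * (1 + delta_max)" using \<alpha>_gt delta_max_pos by (simp add: field_simps)
  then show "0 < 1/\<alpha> - 1" "1/\<alpha> - 1 \<le> delta_max"
    using assms \<open>0 < \<alpha>\<close> by (auto simp: field_simps)
qed

lemma closed_loop_finite_time:
  fixes x :: "real \<Rightarrow> nat \<Rightarrow> real" and z w v :: "real \<Rightarrow> real"
  assumes \<alpha>: "1 - eps < \<alpha>" "\<alpha> < 1"
    and f: "\<forall>y\<in>vecs n. \<forall>t\<ge>0. f y t = fn y t + f\<Delta> y t"
    and b: "\<forall>y\<in>vecs n. \<forall>t\<ge>0. b y t \<noteq> 0"
    and f\<Delta>: "\<forall>y\<in>vecs n. \<forall>t\<ge>0. \<bar>f\<Delta> y t\<bar> \<le> fmax"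
    and d0: "\<forall>y\<in>vecs n. \<forall>t\<ge>0. \<bar>d0 y t\<bar> \<le> dmax"
    and "\<eta> > 0"
    and x: "\<forall>t\<ge>0. x t \<in> vecs n"
    and x_int: "\<forall>i\<in>{1..<n}. \<forall>t\<ge>0. ((\<lambda>\<tau>. x \<tau> (i + 1)) has_integral (x t i - x 0 i)) {0..t}"
    and w_int: "\<forall>t\<ge>0. (w has_integral (x t n - x 0 n)) {0..t}"
    and "z 0 = x 0 n"
    and z: "\<forall>t\<ge>0. (z has_real_derivative
      (- (\<Sum>i=1..n. C i * \<bar>x t i\<bar> powr alphas n \<alpha> i * sgn (x t i)))) (at t within {0..})"
    and v: "\<forall>t\<ge>0. v t \<in> (\<lambda>\<sigma>. - (\<eta> + dmax + fmax) * \<sigma>) ` Sgn (x t n - z t)"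
    and loop: "AE \<tau> in lebesgue. \<tau> \<ge> 0 \<longrightarrow>
      w \<tau> = f (x \<tau>) \<tau> + b (x \<tau>) \<tau> *
        (inverse (b (x \<tau>) \<tau>) *
          ((- fn (x \<tau>) \<tau> - (\<Sum>i=1..n. C i * \<bar>x \<tau> i\<bar> powr alphas n \<alpha> i * sgn (x \<tau> i))) + v \<tau>))
        + d0 (x \<tau>) \<tau>"
  shows "\<exists>T\<ge>0. \<forall>t\<ge>T. \<forall>i\<in>{1..n}. x t i = 0"
proof -
  define \<delta> where "\<delta> = 1/\<alpha> - 1"
  define S where "S t = (\<Sum>i=1..n. C i * \<bar>x t i\<bar> powr alphas n \<alpha> i * sgn (x t i))" for t
  obtain "0 < \<alpha>" "0 < \<delta>" "\<delta> \<le> delta_max"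
    using alpha_bounds[OF \<alpha>] by (simp add: \<delta>_def)
  have on_surface: "x t n = z t" if "t \<ge> 0" for t
    using closed_loop_stays_on_sliding_surface[OF f b f\<Delta> d0 \<open>\<eta> > 0\<close> x w_int \<open>z 0 = x 0 n\<close> _ v _ that]
      z loop by (simp add: S_def)
  have "hom_field n C \<delta> (x t) n = - S t" for t
    unfolding hom_field_def S_def using alphas_eq_hom_weight[OF \<open>0 < \<alpha>\<close> \<alpha>(2)]
    by (auto simp: \<delta>_def signed_powr_def mult.assoc intro!: sum.cong)
  then have "((\<lambda>s. x s i) has_real_derivative hom_field n C \<delta> (x t) i) (at t)"
    if "0 < t" "1 \<le> i" "i \<le> n" for t i
    using has_real_derivative_chain_trajectory[OF x_int w_int _ on_surface that, of S] z that
    by (auto simp: S_def hom_field_def split: if_splits)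
  then interpret hom_chain_trajectory n C rt \<sigma> \<delta> x
    using \<open>0 < \<delta>\<close> \<open>\<delta> \<le> delta_max\<close> continuous_on_chain_trajectory[OF x_int w_int]
    by unfold_locales auto
  show ?thesis by (rule finite_time_convergence)
qed

end

theorem theorem1:
  fixes n :: nat and C :: "nat \<Rightarrow> real"
  assumes n1: "n \<ge> 1"
    and hurw: "hurwitz (char_poly n C)"
  shows "\<exists>\<epsilon>. 0 < \<epsilon> \<and> \<epsilon> < 1 \<and>
    (\<forall>\<alpha>. 1 - \<epsilon> < \<alpha> \<and> \<alpha> < 1 \<longrightarrow>
    (\<forall>(f :: (nat \<Rightarrow> real) \<Rightarrow> real \<Rightarrow> real) fn f\<Delta> b d0 fmax dmax \<eta>
        (x :: real \<Rightarrow> nat \<Rightarrow> real) (z :: real \<Rightarrow> real) (w :: real \<Rightarrow> real) (v :: real \<Rightarrow> real).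
      loc_lipschitz_state n f \<and>
      (\<forall>y\<in>vecs n. \<forall>t\<ge>0. f y t = fn y t + f\<Delta> y t) \<and>
      (\<forall>y\<in>vecs n. \<forall>t\<ge>0. b y t \<noteq> 0) \<and>
      fmax \<ge> 0 \<and> dmax \<ge> 0 \<and>
      (\<forall>y\<in>vecs n. \<forall>t\<ge>0. \<bar>f\<Delta> y t\<bar> \<le> fmax) \<and>
      (\<forall>y\<in>vecs n. \<forall>t\<ge>0. \<bar>d0 y t\<bar> \<le> dmax) \<and>
      \<eta> > 0 \<and>
      \<comment> \<open>trajectory: absolutely continuous (integral form) solution on [0,oo)\<close>
      (\<forall>t\<ge>0. x t \<in> vecs n) \<and>
      (\<forall>i\<in>{1..<n}. \<forall>t\<ge>0. ((\<lambda>\<tau>. x \<tau> (i + 1)) has_integral (x t i - x 0 i)) {0..t}) \<and>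
      (\<forall>t\<ge>0. (w has_integral (x t n - x 0 n)) {0..t}) \<and>
      \<comment> \<open>integral-terminal sliding variable s = x_n - z with z(0) = x_n(0)\<close>
      z 0 = x 0 n \<and>
      (\<forall>t\<ge>0. (z has_real_derivative
          (- (\<Sum>i=1..n. C i * \<bar>x t i\<bar> powr alphas n \<alpha> i * sgn (x t i)))) (at t within {0..})) \<and>
      \<comment> \<open>discontinuous control term: v = -(eta+dmax+fmax) sgn(s), set-valued at s = 0\<close>
      (\<forall>t\<ge>0. v t \<in> (\<lambda>\<sigma>. - (\<eta> + dmax + fmax) * \<sigma>) ` Sgn (x t n - z t)) \<and>
      \<comment> \<open>closed loop: x_n' = f + b u + d0 with u = b^-1 (u_eqv + u_dis), a.e.\<close>
      (AE \<tau> in lebesgue. \<tau> \<ge> 0 \<longrightarrow>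
         w \<tau> = f (x \<tau>) \<tau> + b (x \<tau>) \<tau> *
           (inverse (b (x \<tau>) \<tau>) *
             ((- fn (x \<tau>) \<tau> - (\<Sum>i=1..n. C i * \<bar>x \<tau> i\<bar> powr alphas n \<alpha> i * sgn (x \<tau> i)))
              + v \<tau>))
           + d0 (x \<tau>) \<tau>)
      \<longrightarrow> (\<exists>T\<ge>0. \<forall>t\<ge>T. \<forall>i\<in>{1..n}. x t i = 0)))"
proof -
  obtain rt \<sigma> where "hurwitz_chain n C rt \<sigma>" using hurwitz_chain_exists[OF n1 hurw] .
  then interpret hurwitz_chain n C rt \<sigma> .
  show ?thesis
  proof (rule exI[of _ eps], intro conjI allI impI, goal_cases)
    case 1 show ?case by (fact eps_bounds)
  next
    case 2 show ?case by (fact eps_bounds)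
  next
    case (3 \<alpha> f fn f\<Delta> b d0 fmax dmax \<eta> x z w v)
    then show ?case
      by (elim conjE) (rule closed_loop_finite_time; assumption)
  qed
qed

end
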